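(* Let $\mathcal{N}$ be a chemical reaction network with stoichiometric subspace of dimension $s$, let $\{\omega^1,\dots,\omega^d\}$ be a reduced basis of $\Gamma^\perp$ and $\widetilde f_\kappa$ the associated extended rate function. The terms in the expansion of $\det(J_c(\widetilde f_\kappa))$ are monomials in $\kappa$ of total degree $s$ and of degree at most one in each rate constant. Further, let $R=\{y^1\to y'^1,\dots,y^s\to y'^s\}$ be a set of $s$ reactions of $\mathcal{N}$. For $c\in\mathbb{R}^n_+$, the coefficient of the monomial $\prod_{i=1}^s k_{y^i\to y'^i}$ in $\det(J_c(\widetilde f_\kappa))$ is $$(-1)^s\,c^{-\mathbf{1}+\sum_{i=1}^s y^i}\sum_{I\in\mathcal{O}_d(\mathcal{N})}\det(\mathcal{Y}(R)_I)\det(\Gamma(R)_I)\prod_{i\in I}c_i,$$ and equivalently it equals $$(-1)^d\,c^{-\mathbf{1}+\sum_{i=1}^s y^i}\sum_{R'\in\mathcal{R}_s,\ R'\cap\mathcal{R}=R}\sigma(R')\prod_{S_i\to 0\in R'\setminus R}c_i.$$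
   Context: A chemical reaction network $\mathcal{N}=(\mathcal{S},\mathcal{C},\mathcal{R})$ consists of a finite set of species $\mathcal{S}=\{S_1,\dots,S_n\}$, a finite set of complexes $\mathcal{C}\subset\mathbb{Z}_{\ge 0}^n$ (species $S_i$ identified with the $i$-th standard basis vector; zero complex allowed), and a finite set of reactions $\mathcal{R}\subset\mathcal{C}\times\mathcal{C}$, written $y\to y'$, with $y\ne y'$. A rate vector is $\kappa=(k_{y\to y'})\in\mathbb{R}_+^{\mathcal{R}}$ ($\mathbb{R}_+$ the positive reals); the mass-action species formation rate function is $f_\kappa(c)=\sum_{y\to y'\in\mathcal{R}}k_{y\to y'}c^y(y'-y)$ with $c^y=\prod_i c_i^{y_i}$ (also for integer exponents, e.g. $c^{-\mathbf 1+v}$ with $\mathbf 1=(1,\dots,1)$), components $f_{\kappa,i}$. The stoichiometric subspace is $\Gamma=\mathrm{span}\{y'-y:y\to y'\in\mathcal{R}\}$, $s=\dim\Gamma$, $d=n-s$. A basis $\{\omega^1,\dots,\omega^d\}$ of $\Gamma^\perp$ with $\omega^i=(\lambda^i_1,\dots,\lambda^i_n)$ is reduced if $\lambda^i_i=1$ and $\lambda^i_j=0$ for $j\in\{1,\dots,d\}$, $j\ne i$ (species assumed ordered so one exists). The extended rate function is $\widetilde f_\kappa(c)=(\omega^1\cdot c,\dots,\omega^d\cdot c,f_{\kappa,d+1}(c),\dots,f_{\kappa,n}(c))$; $J_c$ is the Jacobian at $c$. Let $\mathcal{O}(\mathcal{N})=\{i: S_i\to 0\notin\mathcal{R}\}$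 and $\mathcal{O}_d(\mathcal{N})$ the set of subsets of $\mathcal{O}(\mathcal{N})$ of cardinality $d$. For a set $R$ of $m$ reactions $y^i\to y'^i$, $\mathcal{Y}(R)$ is the $n\times m$ matrix with $i$-th column $y^i$ and $\Gamma(R)$ the $n\times m$ matrix with $i$-th column $y^i-y'^i$; for an $n\times s$ matrix $M$ and $I\in\mathcal{O}_d(\mathcal{N})$, $M_I$ is the $s\times s$ matrix obtained by deleting the rows with index in $I$. For a set $R'$ of $n$ reactions, $\sigma(R')=(-1)^n\det(\mathcal{Y}(R'))\det(\Gamma(R'))$. $\mathcal{R}_s$ is the set of all sets $R'$ of $n$ reactions of the form $R\cup\{S_i\to 0: i\in I\}$, where $R$ is a set of $s$ reactions of $\mathcal{R}$ and $I\in\mathcal{O}_d(\mathcal{N})$. *)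

theory Defs
  imports "HOL-Analysis.Analysis" "Jordan_Normal_Form.Determinant"
    "Jordan_Normal_Form.DL_Submatrix" "Jordan_Normal_Form.DL_Rank"
begin

text \<open>Species are indexed 0,...,n-1 (the paper's S_1,...,S_n shifted by one).
  A complex is a function nat => nat vanishing outside {0..<n}; a reaction y -> y'
  is the pair (y, y').\<close>

type_synonym cplx = "nat \<Rightarrow> nat"
type_synonym rxn = "cplx \<times> cplx"

definition crn :: "nat \<Rightarrow> rxn set \<Rightarrow> bool" where
  "crn n Rs \<longleftrightarrow> finite Rs \<and>
     (\<forall>(y, y') \<in> Rs. y \<noteq> y' \<and> (\<forall>i\<ge>n. y i = 0 \<and> y' i = 0))"

definition outflow :: "nat \<Rightarrow> rxn" where
  "outflow i = ((\<lambda>j. if j = i then 1 else 0), (\<lambda>_. 0))"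

definition cpow :: "nat \<Rightarrow> (nat \<Rightarrow> real) \<Rightarrow> (nat \<Rightarrow> int) \<Rightarrow> real" where
  "cpow n c v = (\<Prod>j<n. c j powi v j)"

definition rate_fun :: "nat \<Rightarrow> rxn set \<Rightarrow> (rxn \<Rightarrow> real) \<Rightarrow> (nat \<Rightarrow> real) \<Rightarrow> nat \<Rightarrow> real" where
  "rate_fun n Rs \<kappa> c i =
     (\<Sum>r\<in>Rs. \<kappa> r * (\<Prod>j<n. c j ^ fst r j) * (real (snd r i) - real (fst r i)))"

definition ext_rate_fun :: "nat \<Rightarrow> nat \<Rightarrow> (nat \<Rightarrow> nat \<Rightarrow> real) \<Rightarrow> rxn set \<Rightarrow> (rxn \<Rightarrow> real)
    \<Rightarrow> (nat \<Rightarrow> real) \<Rightarrow> nat \<Rightarrow> real" where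
  "ext_rate_fun n d \<omega> Rs \<kappa> c i =
     (if i < d then (\<Sum>j<n. \<omega> i j * c j) else rate_fun n Rs \<kappa> c i)"

definition partial :: "((nat \<Rightarrow> real) \<Rightarrow> real) \<Rightarrow> (nat \<Rightarrow> real) \<Rightarrow> nat \<Rightarrow> real" where
  "partial F c j = deriv (\<lambda>t. F (c(j := t))) (c j)"

definition jacobian_mat :: "nat \<Rightarrow> ((nat \<Rightarrow> real) \<Rightarrow> nat \<Rightarrow> real) \<Rightarrow> (nat \<Rightarrow> real) \<Rightarrow> real mat" where
  "jacobian_mat n F c = mat n n (\<lambda>(i, j). partial (\<lambda>x. F x i) c j)"

text \<open>A fixed enumeration of a finite set of reactions (the formulas below do not
  depend on the choice, since they only involve products of two determinants of
  matrices with the same column order).\<close>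
definition enum_rxns :: "rxn set \<Rightarrow> rxn list" where
  "enum_rxns R = (SOME xs. distinct xs \<and> set xs = R)"

definition Ymat :: "nat \<Rightarrow> rxn set \<Rightarrow> real mat" where
  "Ymat n R = (let xs = enum_rxns R in
     mat n (length xs) (\<lambda>(i, k). real (fst (xs ! k) i)))"

definition Gmat :: "nat \<Rightarrow> rxn set \<Rightarrow> real mat" where
  "Gmat n R = (let xs = enum_rxns R in
     mat n (length xs) (\<lambda>(i, k). real (fst (xs ! k) i) - real (snd (xs ! k) i)))"

text \<open>Dimension s of the stoichiometric subspace: dimension of the span of the
  reaction vectors y' - y (the column space of Gamma(R_all), up to sign).\<close>
definition stoich_dim :: "nat \<Rightarrow> rxn set \<Rightarrow> nat" where
  "stoich_dim n Rs = vec_space.rank n (Gmat n Rs)"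

definition del_rows :: "real mat \<Rightarrow> nat set \<Rightarrow> real mat" where
  "del_rows M I = submatrix M ({0..<dim_row M} - I) {0..<dim_col M}"

definition Oset :: "nat \<Rightarrow> rxn set \<Rightarrow> nat set" where
  "Oset n Rs = {i. i < n \<and> outflow i \<notin> Rs}"

definition Od :: "nat \<Rightarrow> rxn set \<Rightarrow> nat \<Rightarrow> nat set set" where
  "Od n Rs d = {I. I \<subseteq> Oset n Rs \<and> card I = d}"

definition sigma :: "nat \<Rightarrow> rxn set \<Rightarrow> real" where
  "sigma n R' = (-1) ^ n * det (Ymat n R') * det (Gmat n R')"

definition Rs_sets :: "nat \<Rightarrow> rxn set \<Rightarrow> nat \<Rightarrow> rxn set set" where
  "Rs_sets n Rs s = {R \<union> outflow ` I | R I. R \<subseteq> Rs \<and> card R = s \<and> I \<in> Od n Rs (n - s)}"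

definition reduced_basis :: "nat \<Rightarrow> rxn set \<Rightarrow> nat \<Rightarrow> (nat \<Rightarrow> nat \<Rightarrow> real) \<Rightarrow> bool" where
  "reduced_basis n Rs d \<omega> \<longleftrightarrow>
     \<comment> \<open>each omega i lies in Gamma-perp\<close>
     (\<forall>i<d. \<forall>r\<in>Rs. (\<Sum>j<n. \<omega> i j * (real (snd r j) - real (fst r j))) = 0) \<and>
     \<comment> \<open>linearly independent\<close>
     (\<forall>a. (\<forall>j<n. (\<Sum>i<d. a i * \<omega> i j) = 0) \<longrightarrow> (\<forall>i<d. a i = 0)) \<and>
     \<comment> \<open>spanning Gamma-perp\<close>
     (\<forall>v. (\<forall>r\<in>Rs. (\<Sum>j<n. v j * (real (snd r j) - real (fst r j))) = 0) \<longrightarrow>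
          (\<exists>a. \<forall>j<n. v j = (\<Sum>i<d. a i * \<omega> i j))) \<and>
     \<comment> \<open>reduced form\<close>
     (\<forall>i<d. \<omega> i i = 1 \<and> (\<forall>j<d. j \<noteq> i \<longrightarrow> \<omega> i j = 0))"

end

theory Submission
  imports Defs
begin

text \<open>
  The first d rows of the Jacobian of the extended rate function are the reduced basis vectors
  \<omega>_i, and row i \<ge> d is the sum over reactions r of \<kappa>(r) (y'(r) - y(r))(i) times the gradient of
  c^y(r).  Right multiplication by a unitriangular matrix built from the reduced form clears the
  first d rows, so the determinant is det (\<Gamma>' diag(\<kappa>) H V), where \<Gamma>' holds the last s
  coordinates of the reaction vectors, H(r, j) is the partial derivative of c^y(r) in c(j), and the
  columns of V span \<Gamma>.  Cauchy--Binet over the reactions exhibits a polynomial in \<kappa> whose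
  monomials are the products of \<kappa> over s-sets R, with coefficient det \<Gamma>'(R) det (H(R) V).
  Cauchy--Binet over the row sets J, together with \<Gamma>(R) = V \<Gamma>'(R), turns this coefficient into a
  sum of det Y(R)_J det \<Gamma>(R)_J times monomials in c.  An outflow S_i \<rightarrow> 0 puts e_i into \<Gamma>, which
  makes the rows J of V singular unless i \<in> J; so only the complements of the sets in O_d(N)
  contribute.  Finally, adjoining the outflows S_i \<rightarrow> 0, i \<in> I, to R adds the unit columns e_i to
  both Y and \<Gamma>, and the resulting n \<times> n determinants reduce to the minors without the rows in I.
\<close>

section \<open>Subsets of an index range\<close>

lemma sum_lessThan_add: "(\<Sum>k<d + (s::nat). f k) = (\<Sum>k<d. f k) + (\<Sum>q<s. f (d + q))"
  by (induction s) (simp_all add: add.assoc)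

lemma sum_nth: "distinct xs \<Longrightarrow> sum g (set xs) = (\<Sum>k<length xs. g (xs ! k))"
  using sum.reindex_bij_betw[OF bij_betw_nth[of xs "{..<length xs}" "set xs"], of g] by simp

lemma prod_nth: "distinct xs \<Longrightarrow> prod g (set xs) = (\<Prod>k<length xs. g (xs ! k))"
  using prod.reindex_bij_betw[OF bij_betw_nth[of xs "{..<length xs}" "set xs"], of g] by simp

lemma pick_eq_iff_card:
  "a < card K \<Longrightarrow> b < card K \<Longrightarrow> pick K a = pick K b \<longleftrightarrow> a = b"
  by (metis linorder_neqE_nat order_less_irrefl pick_mono_le)

lemma pick_bij_betw: "finite K \<Longrightarrow> bij_betw (pick K) {0..<card K} K"
proof (rule bij_betw_byWitness[where f' = "\<lambda>x. card {a\<in>K. a < x}"])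
  assume K: "finite K"
  show "\<forall>a\<in>{0..<card K}. card {x\<in>K. x < pick K a} = a" using card_pick_le by auto
  show "\<forall>x\<in>K. pick K (card {a\<in>K. a < x}) = x" using pick_card_in_set by blast
  show "pick K ` {0..<card K} \<subseteq> K" using pick_in_set_le by auto
  have "card {a\<in>K. a < x} < card K" if "x \<in> K" for x
    using K that by (intro psubset_card_mono) auto
  then show "(\<lambda>x. card {a\<in>K. a < x}) ` K \<subseteq> {0..<card K}" by auto
qed

lemma pick_image: "finite K \<Longrightarrow> pick K ` {0..<card K} = K"
  using pick_bij_betw bij_betw_imp_surj_on by blast

lemma pick_less_bound: "K \<subseteq> {0..<m} \<Longrightarrow> a < card K \<Longrightarrow> pick K a < m"
  using pick_in_set_le by fastforce

lemma pick_atLeastLessThan: "i < s \<Longrightarrow> pick {0..<s} i = i"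
  by (induction i) (auto intro!: Least_equality)

lemma prod_pick: "finite K \<Longrightarrow> prod g K = (\<Prod>a<card K. g (pick K a))"
  using prod.reindex_bij_betw[OF pick_bij_betw, of K g] by (simp add: atLeast0LessThan)

lemma map_nth_pick:
  assumes rs: "distinct rs" and K: "K \<subseteq> {0..<length rs}" "card K = s"
  shows "set (map (\<lambda>a. rs ! pick K a) [0..<s]) = (!) rs ` K"
    and "distinct (map (\<lambda>a. rs ! pick K a) [0..<s])"
proof -
  have finK: "finite K" using K(1) finite_subset by blast
  have "set (map (\<lambda>a. rs ! pick K a) [0..<s]) = (!) rs ` pick K ` {0..<s}" by (auto simp: image_image)
  then show set_eq: "set (map (\<lambda>a. rs ! pick K a) [0..<s]) = (!) rs ` K"
    using pick_image[OF finK] K(2) by simp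
  have "inj_on ((!) rs) K" using K(1) by (intro inj_on_nth[OF rs]) auto
  then have "card ((!) rs ` K) = s" using K(2) by (simp add: card_image)
  then show "distinct (map (\<lambda>a. rs ! pick K a) [0..<s])"
    by (intro card_distinct) (subst set_eq, simp)
qed

lemma bij_betw_image_card_subsets:
  assumes h: "bij_betw h A B"
  shows "bij_betw (image h) {K. K \<subseteq> A \<and> card K = s} {R. R \<subseteq> B \<and> card R = s}"
  unfolding bij_betw_def
proof
  show "inj_on (image h) {K. K \<subseteq> A \<and> card K = s}"
    using bij_betw_imp_inj_on[OF bij_betw_Pow[OF h]] by (rule inj_on_subset) auto
  have card: "card (h ` K) = card K" if "K \<subseteq> A" for K
    using h that by (meson bij_betw_imp_inj_on card_image inj_on_subset)
  have "h ` A = B" using h by (simp add: bij_betw_def)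
  then show "image h ` {K. K \<subseteq> A \<and> card K = s} = {R. R \<subseteq> B \<and> card R = s}"
    using card by (auto elim!: subset_imageE intro!: image_eqI)
qed

lemma submatrix_mat:
  assumes I: "I \<subseteq> {0..<r}" and J: "J \<subseteq> {0..<c}"
  shows "submatrix (mat r c f) I J = mat (card I) (card J) (\<lambda>(i,j). f (pick I i, pick J j))"
proof -
  have rows: "{i. i < r \<and> i \<in> I} = I" and cols: "{j. j < c \<and> j \<in> J} = J" using I J by auto
  show ?thesis
    by (rule eq_matI) (use pick_less_bound[OF I] pick_less_bound[OF J] in \<open>simp_all add: submatrix_def rows cols\<close>)
qed

lemma submatrix_mat_all_rows:
  assumes "J \<subseteq> {0..<c}"
  shows "submatrix (mat r c f) {0..<r} J = mat r (card J) (\<lambda>(i,j). f (i, pick J j))"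
  using assms by (subst submatrix_mat) (simp_all, rule eq_matI, auto simp: pick_atLeastLessThan)

lemma submatrix_mat_all_cols:
  assumes "I \<subseteq> {0..<r}"
  shows "submatrix (mat r c f) I {0..<c} = mat (card I) c (\<lambda>(i,j). f (pick I i, j))"
  using assms by (subst submatrix_mat) (simp_all, rule eq_matI, auto simp: pick_atLeastLessThan)

lemma del_rows_mat:
  assumes I: "I \<subseteq> {0..<r}"
  shows "del_rows (mat r c f) I = mat (r - card I) c (\<lambda>(i,j). f (pick ({0..<r} - I) i, j))"
proof -
  have "card ({0..<r} - I) = r - card I" using I by (simp add: card_Diff_subset finite_subset)
  then show ?thesis
    unfolding del_rows_def by (subst submatrix_mat) (simp_all, rule eq_matI, auto simp: pick_atLeastLessThan)
qed

section \<open>Determinants\<close>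

lemma index_mult_mat_mat:
  "i < r \<Longrightarrow> j < c \<Longrightarrow> (mat r n f * mat n c g) $$ (i,j) = (\<Sum>k<n. f (i,k) * g (k,j))"
  by (simp add: scalar_prod_def atLeast0LessThan row_def col_def)

lemma signof_mult_self: "(signof p :: 'a :: comm_ring_1) * signof p = 1"
  by (cases p rule: sign_cases) simp_all

lemma det_permute_cols:
  assumes q: "q permutes {0..<c}"
  shows "det (mat c c (\<lambda>(i,k). f i (q k))) = signof q * det (mat c c (\<lambda>(i,k). f i k))"
proof -
  define M where "M = mat c c (\<lambda>(k,i). f i k)"
  have M: "M \<in> carrier_mat c c" unfolding M_def by simp
  have q_lt: "k < c \<Longrightarrow> q k < c" for k using permutes_in_image[OF q] by simp
  have "det (mat c c (\<lambda>(i,k). f i (q k))) = det (transpose_mat (mat c c (\<lambda>(i,k). f i (q k))))"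
    by (rule det_transpose[symmetric, where n = c]) simp
  also have "transpose_mat (mat c c (\<lambda>(i,k). f i (q k))) = mat c c (\<lambda>(k,i). M $$ (q k, i))"
    by (rule eq_matI) (simp_all add: M_def q_lt)
  also have "det \<dots> = signof q * det M" by (rule det_permute_rows[OF M q])
  also have "det M = det (transpose_mat M)" using M by (simp add: det_transpose)
  also have "transpose_mat M = mat c c (\<lambda>(i,k). f i k)" unfolding M_def by (rule eq_matI) auto
  finally show ?thesis .
qed

text \<open>Both determinants change by the same sign under a reordering of the columns.\<close>
lemma det_mult_det_reorder_cols:
  fixes f g :: "nat \<Rightarrow> 'a \<Rightarrow> 'b :: comm_ring_1"
  assumes xs: "distinct xs" and ys: "distinct ys" and eq: "set xs = set ys" and len: "length xs = c"
  shows "det (mat c c (\<lambda>(i,k). f i (ys ! k))) * det (mat c c (\<lambda>(i,k). g i (ys ! k))) =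
         det (mat c c (\<lambda>(i,k). f i (xs ! k))) * det (mat c c (\<lambda>(i,k). g i (xs ! k)))"
proof -
  have len_ys: "length ys = c" using xs ys eq len by (metis distinct_card)
  have bij: "bij_betw ((!) xs) {0..<c} (set ys)" and bij_ys: "bij_betw ((!) ys) {0..<c} (set ys)"
    using bij_betw_nth[of xs "{0..<c}" "set ys"] bij_betw_nth[of ys "{0..<c}" "set ys"] xs ys eq len len_ys
    by (auto simp: atLeast0LessThan)
  have inv: "bij_betw (the_inv_into {0..<c} ((!) xs)) (set ys) {0..<c}"
    by (rule bij_betw_the_inv_into[OF bij])
  define q where "q k = (if k < c then the_inv_into {0..<c} ((!) xs) (ys ! k) else k)" for k
  have q_nth: "xs ! q k = ys ! k" and q_lt: "q k < c" if "k < c" for k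
  proof -
    have "ys ! k \<in> set ys" using that len_ys by simp
    then show "xs ! q k = ys ! k" "q k < c"
      using that f_the_inv_into_f_bij_betw[OF bij] bij_betwE[OF inv] by (auto simp: q_def)
  qed
  have q: "q permutes {0..<c}"
  proof (rule inj_imp_permutes)
    show "inj_on q {0..<c}"
    proof (rule inj_onI)
      fix a b assume ab: "a \<in> {0..<c}" "b \<in> {0..<c}" "q a = q b"
      then have "ys ! a = ys ! b" using q_nth by (metis atLeastLessThan_iff)
      then show "a = b" using ab ys len_ys by (simp add: nth_eq_iff_index_eq)
    qed
    show "q k \<in> {0..<c}" if "k \<in> {0..<c}" for k using q_lt that by simp
    show "q k = k" if "k \<notin> {0..<c}" for k using that by (simp add: q_def)
  qed simp
  have reorder: "det (mat c c (\<lambda>(i,k). h i (ys ! k))) = signof q * det (mat c c (\<lambda>(i,k). h i (xs ! k)))"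
    for h :: "nat \<Rightarrow> 'a \<Rightarrow> 'b"
  proof -
    have "mat c c (\<lambda>(i,k). h i (ys ! k)) = mat c c (\<lambda>(i,k). h i (xs ! q k))"
      by (rule eq_matI) (simp_all add: q_nth)
    then show ?thesis using det_permute_cols[OF q, of "\<lambda>i k. h i (xs ! k)"] by simp
  qed
  have "signof q * X * (signof q * Y) = (signof q * signof q) * (X * Y)" for X Y :: 'b
    by (simp add: ac_simps)
  then show ?thesis unfolding reorder[of f] reorder[of g] signof_mult_self by simp
qed

lemma det_scale_rows_cols:
  assumes M: "M \<in> carrier_mat c c"
  shows "det (mat c c (\<lambda>(i,k). (a i * b k) * M $$ (i,k))) = prod a {0..<c} * prod b {0..<c} * det M"
proof -
  have expand: "signof p * (\<Prod>i=0..<c. mat c c (\<lambda>(i,k). (a i * b k) * M $$ (i,k)) $$ (i, p i)) =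
      prod a {0..<c} * prod b {0..<c} * (signof p * (\<Prod>i=0..<c. M $$ (i, p i)))"
    if p: "p permutes {0..<c}" for p
  proof -
    have "(\<Prod>i=0..<c. b (p i)) = prod b {0..<c}"
      using prod.permute[OF p, of b] by (simp add: comp_def)
    then show ?thesis using permutes_in_image[OF p] by (simp add: prod.distrib)
  qed
  have scaled: "mat c c (\<lambda>(i,k). (a i * b k) * M $$ (i,k)) \<in> carrier_mat c c" by simp
  show ?thesis
    unfolding det_def'[OF M] det_def'[OF scaled] sum_distrib_left
    by (intro sum.cong refl) (rule expand, simp)
qed

lemma det_upper_unitriangular:
  assumes U: "U \<in> carrier_mat n n" and upper: "\<And>i j. j < i \<Longrightarrow> i < n \<Longrightarrow> U $$ (i,j) = 0"
    and diag: "\<And>i. i < n \<Longrightarrow> U $$ (i,i) = (1 :: 'a :: comm_ring_1)"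
  shows "det U = 1"
proof -
  have "upper_triangular U" unfolding upper_triangular_def using U upper by auto
  then have "det U = prod_list (diag_mat U)" using det_upper_triangular U by blast
  also have "diag_mat U = map (\<lambda>_. 1) [0..<n]" using U diag by (simp add: diag_mat_def)
  finally show ?thesis by (simp add: map_replicate_const)
qed

lemma permutes_compl_then_set:
  assumes I: "I \<subseteq> {0..<n}" and n: "n = s + card I"
  shows "(\<lambda>a. if a < s then pick ({0..<n} - I) a else if a < n then pick I (a - s) else a) permutes {0..<n}"
    (is "?p permutes _")
proof -
  let ?J = "{0..<n} - I"
  have finI: "finite I" using I finite_subset by blast
  have cJ: "card ?J = s" using I n finI by (simp add: card_Diff_subset)
  have pJ: "pick ?J a \<in> ?J" if "a < s" for a using pick_in_set_le[of a ?J] cJ that by simp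
  have pI: "pick I b \<in> I" if "b < card I" for b using pick_in_set_le[of b I] that by simp
  show ?thesis
  proof (rule inj_imp_permutes)
    show "inj_on ?p {0..<n}"
    proof (rule inj_onI)
      fix a b assume ab: "a \<in> {0..<n}" "b \<in> {0..<n}" "?p a = ?p b"
      consider "a < s" "b < s" | "a < s" "\<not> b < s" | "\<not> a < s" "b < s" | "\<not> a < s" "\<not> b < s" by blast
      then show "a = b"
      proof cases
        case 1 then show ?thesis using ab pick_eq_iff_card[of a ?J b] cJ by simp
      next
        case 2 then show ?thesis using ab pJ[of a] pI[of "b - s"] n by auto
      next
        case 3
        then have "a - s < card I" using ab(1) n by auto
        then show ?thesis using 3 ab pJ[of b] pI[of "a - s"] by auto
      next
        case 4 then show ?thesis using ab pick_eq_iff_card[of "a - s" I "b - s"] n by auto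
      qed
    qed
    show "?p a \<in> {0..<n}" if a: "a \<in> {0..<n}" for a
    proof (cases "a < s")
      case False
      then have "a - s < card I" using a n by auto
      then have "pick I (a - s) \<in> I" by (rule pI)
      then show ?thesis using False a I by auto
    qed (use pJ in auto)
  qed (use n in auto)
qed

text \<open>Columns that are unit vectors at the rows in I are moved to a lower right identity block
  by the row permutation p, which lists the rows outside I first.\<close>
lemma det_unit_cols:
  fixes f :: "nat \<Rightarrow> nat \<Rightarrow> 'a :: idom"
  assumes I: "I \<subseteq> {0..<n}" and n: "n = s + card I"
  defines "p \<equiv> \<lambda>a. if a < s then pick ({0..<n} - I) a else if a < n then pick I (a - s) else a"
  shows "det (mat n n (\<lambda>(i,k). if k < s then f i k else if i = pick I (k - s) then 1 else 0)) =
    signof p * det (mat s s (\<lambda>(a,l). f (pick ({0..<n} - I) a) l))"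
proof -
  let ?J = "{0..<n} - I" and ?d = "card I"
  define M where "M = mat n n (\<lambda>(i,k). if k < s then f i k else if i = pick I (k - s) then 1 else (0::'a))"
  define MJ where "MJ = mat s s (\<lambda>(a,l). f (pick ?J a) l)"
  define MI where "MI = mat ?d s (\<lambda>(a,l). f (pick I a) l)"
  have p: "p permutes {0..<n}" unfolding p_def by (rule permutes_compl_then_set[OF I n])
  have finI: "finite I" using I finite_subset by blast
  have cJ: "card ?J = s" using I n finI by (simp add: card_Diff_subset)
  have "mat n n (\<lambda>(i,k). M $$ (p i, k)) = four_block_mat MJ (0\<^sub>m s ?d) MI (1\<^sub>m ?d)"
  proof (rule eq_matI)
    fix i k assume "i < dim_row (four_block_mat MJ (0\<^sub>m s ?d) MI (1\<^sub>m ?d))"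
      "k < dim_col (four_block_mat MJ (0\<^sub>m s ?d) MI (1\<^sub>m ?d))"
    then have ik: "i < n" "k < n" using n by (simp_all add: MJ_def MI_def)
    have p_lt: "p i < n" using permutes_in_image[OF p] ik by simp
    have "pick ?J i \<noteq> pick I (k - s)" if "i < s" "\<not> k < s"
      using that pick_in_set_le[of i ?J] pick_in_set_le[of "k - s" I] cJ ik n by auto
    moreover have "pick I (i - s) = pick I (k - s) \<longleftrightarrow> i = k" if "\<not> i < s" "\<not> k < s"
      using that pick_eq_iff_card[of "i - s" I "k - s"] ik n by auto
    ultimately show "mat n n (\<lambda>(i,k). M $$ (p i, k)) $$ (i,k) = four_block_mat MJ (0\<^sub>m s ?d) MI (1\<^sub>m ?d) $$ (i,k)"
      using ik p_lt n by (auto simp: M_def MJ_def MI_def p_def)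
  qed (simp_all add: n MJ_def MI_def)
  moreover have "det (four_block_mat MJ (0\<^sub>m s ?d) MI (1\<^sub>m ?d)) = det MJ"
    by (subst det_four_block_mat_upper_right_zero[of _ s _ ?d]) (simp_all add: MJ_def MI_def)
  ultimately have "signof p * det M = det MJ"
    using det_permute_rows[OF _ p, of M] by (simp add: M_def)
  then have "signof p * (signof p * det M) = signof p * det MJ" by simp
  then show ?thesis unfolding M_def MJ_def mult.assoc[symmetric] signof_mult_self by simp
qed

lemma det_mult_det_unit_cols:
  fixes f g :: "nat \<Rightarrow> nat \<Rightarrow> 'a :: idom"
  assumes "I \<subseteq> {0..<n}" and "n = s + card I"
  shows "det (mat n n (\<lambda>(i,k). if k < s then f i k else if i = pick I (k - s) then 1 else 0)) *
         det (mat n n (\<lambda>(i,k). if k < s then g i k else if i = pick I (k - s) then 1 else 0)) =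
         det (mat s s (\<lambda>(a,l). f (pick ({0..<n} - I) a) l)) * det (mat s s (\<lambda>(a,l). g (pick ({0..<n} - I) a) l))"
  unfolding det_unit_cols[OF assms]
  by (metis (no_types, lifting) mult.assoc mult.left_commute mult_1 signof_mult_self)

text \<open>Expanding \<open>det (A * B)\<close> by multilinearity in the rows leaves only the terms
  indexed by injective maps \<open>{0..<s} \<rightarrow> {0..<m}\<close>, and such a map is the same as its image
  together with a permutation of \<open>{0..<s}\<close>.\<close>
lemma det_mult_sum_inj_rows:
  fixes A B :: "'a :: comm_ring_1 mat"
  assumes A: "A \<in> carrier_mat s m" and B: "B \<in> carrier_mat m s"
  shows "det (A * B) = (\<Sum>f \<in> {f. (\<forall>i\<in>{0..<s}. f i \<in> {0..<m}) \<and> (\<forall>i. i \<notin> {0..<s} \<longrightarrow> f i = i)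
                                 \<and> inj_on f {0..<s}}.
            (\<Prod>i=0..<s. A $$ (i, f i)) * det (mat\<^sub>r s s (\<lambda>i. row B (f i))))"
    (is "_ = sum ?g ?Inj")
proof -
  let ?F = "{f. (\<forall>i\<in>{0..<s}. f i \<in> {0..<m}) \<and> (\<forall>i. i \<notin> {0..<s} \<longrightarrow> f i = i)}"
  have rows: "(\<lambda>i. row B (f i)) \<in> {0..<s} \<rightarrow> carrier_vec s" for f using B by auto
  have "det (A * B) = sum (\<lambda>f. det (mat\<^sub>r s s (\<lambda>i. A $$ (i, f i) \<cdot>\<^sub>v row B (f i)))) ?F"
    by (simp add: mat_mul_finsum_alt[OF A B] det_linear_rows_sum[where S="{0..<m}"] B)
  also have "\<dots> = sum ?g ?F"
    by (rule sum.cong[OF refl]) (rule det_rows_mul[OF rows])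
  also have "\<dots> = sum ?g ?Inj"
  proof (rule sum.mono_neutral_right)
    show "finite ?F" by (rule finite_bounded_functions) auto
    show "\<forall>f\<in>?F - ?Inj. ?g f = 0"
    proof
      fix f assume "f \<in> ?F - ?Inj"
      then obtain i j where ij: "i < s" "j < s" "i \<noteq> j" "f i = f j" unfolding inj_on_def by auto
      have "det (mat\<^sub>r s s (\<lambda>i. row B (f i))) = 0"
        by (rule det_identical_rows[OF _ ij(3,1,2)]) (use B ij in auto)
      then show "?g f = 0" by simp
    qed
  qed auto
  finally show ?thesis .
qed

lemma pick_comp_permutes:
  assumes K: "K \<subseteq> {0..<m}" "card K = s" and p: "p permutes {0..<s}"
  shows "(\<lambda>i. pick K (p i)) ` {0..<s} = K" and "inj_on (\<lambda>i. pick K (p i)) {0..<s}"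
    and "i < s \<Longrightarrow> card {a \<in> K. a < pick K (p i)} = p i"
proof -
  have finK: "finite K" using K finite_subset by blast
  have p_lt: "i < s \<Longrightarrow> p i < s" for i using permutes_in_image[OF p] by simp
  have "(\<lambda>i. pick K (p i)) ` {0..<s} = pick K ` p ` {0..<s}" by (simp add: image_image)
  then show "(\<lambda>i. pick K (p i)) ` {0..<s} = K"
    using pick_image[OF finK] K(2) by (simp add: permutes_image[OF p])
  show "inj_on (\<lambda>i. pick K (p i)) {0..<s}"
    using p_lt pick_eq_iff_card K(2) permutes_inj_on[OF p] by (simp add: inj_on_def)
  show "i < s \<Longrightarrow> card {a \<in> K. a < pick K (p i)} = p i"
    using card_pick_le p_lt K(2) by simp
qed

lemma rank_in_image_permutes:
  fixes f :: "nat \<Rightarrow> nat"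
  assumes inj: "inj_on f {0..<s}"
  shows "(\<lambda>i. if i < s then card {a \<in> f ` {0..<s}. a < f i} else i) permutes {0..<s}"
proof (rule inj_imp_permutes)
  let ?K = "f ` {0..<s}"
  have "card {a \<in> ?K. a < f i} < card ?K" if "i < s" for i
  proof (rule psubset_card_mono)
    have "f i \<in> ?K" "f i \<notin> {a \<in> ?K. a < f i}" using that by auto
    then show "{a \<in> ?K. a < f i} \<subset> ?K" by blast
  qed simp
  then show "(if i < s then card {a \<in> ?K. a < f i} else i) \<in> {0..<s}" if "i \<in> {0..<s}" for i
    using that card_image[OF inj] by simp
  show "inj_on (\<lambda>i. if i < s then card {a \<in> ?K. a < f i} else i) {0..<s}"
  proof (rule inj_onI)
    fix i j assume ij: "i \<in> {0..<s}" "j \<in> {0..<s}"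
      and "(if i < s then card {a \<in> ?K. a < f i} else i) = (if j < s then card {a \<in> ?K. a < f j} else j)"
    then have "pick ?K (card {a \<in> ?K. a < f i}) = pick ?K (card {a \<in> ?K. a < f j})" by simp
    moreover have "f i \<in> ?K" "f j \<in> ?K" using ij by auto
    ultimately have "f i = f j" using pick_card_in_set by metis
    then show "i = j" using inj ij by (simp add: inj_on_eq_iff)
  qed
qed auto

lemma inj_maps_bij_subset_perm:
  "bij_betw (\<lambda>(K, p) i. if i < s then pick K (p i) else i)
     (SIGMA K:{K. K \<subseteq> {0..<m} \<and> card K = s}. {p. p permutes {0..<s}})
     {f. (\<forall>i\<in>{0..<s}. f i \<in> {0..<m}) \<and> (\<forall>i. i \<notin> {0..<s} \<longrightarrow> f i = i) \<and> inj_on f {0..<s}}"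
  (is "bij_betw ?\<phi> ?KP ?Inj")
proof -
  define \<psi> where "\<psi> f = (f ` {0..<s}, \<lambda>i. if i < s then card {a \<in> f ` {0..<s}. a < f i} else i)"
    for f :: "nat \<Rightarrow> nat"
  have KP: "\<psi> (?\<phi> x) = x \<and> ?\<phi> x \<in> ?Inj" if x_KP: "x \<in> ?KP" for x
  proof -
    obtain K p where x: "x = (K, p)" and K: "K \<subseteq> {0..<m}" "card K = s" and p: "p permutes {0..<s}"
      using x_KP by auto
    note pc = pick_comp_permutes[OF K p]
    have "\<psi> (?\<phi> x) = x"
      using pc(1,3) permutes_not_in[OF p] unfolding \<psi>_def x by (auto simp: fun_eq_iff)
    moreover have "?\<phi> x \<in> ?Inj"
      using pc(2) pick_less_bound[OF K(1)] permutes_in_image[OF p] K(2) by (auto simp: x inj_on_def)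
    ultimately show ?thesis ..
  qed
  have Inj: "?\<phi> (\<psi> f) = f \<and> \<psi> f \<in> ?KP" if "f \<in> ?Inj" for f
  proof -
    have inj: "inj_on f {0..<s}" and range: "\<forall>i\<in>{0..<s}. f i \<in> {0..<m}"
      and outside: "\<forall>i. i \<notin> {0..<s} \<longrightarrow> f i = i"
      using that by auto
    have "?\<phi> (\<psi> f) = f" using pick_card_in_set outside by (auto simp: \<psi>_def fun_eq_iff)
    moreover have "\<psi> f \<in> ?KP"
      using rank_in_image_permutes[OF inj] range card_image[OF inj] unfolding \<psi>_def by auto
    ultimately show ?thesis ..
  qed
  show ?thesis
  proof (rule bij_betw_byWitness[where f' = \<psi>])
    show "\<forall>x\<in>?KP. \<psi> (?\<phi> x) = x" using KP by simp
    show "?\<phi> ` ?KP \<subseteq> ?Inj" using KP by (intro image_subsetI) simp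
    show "\<forall>f\<in>?Inj. ?\<phi> (\<psi> f) = f" using Inj by simp
    show "\<psi> ` ?Inj \<subseteq> ?KP" using Inj by (intro image_subsetI) simp
  qed
qed

lemma sum_permutes_pick_eq_det_minors:
  fixes A B :: "'a :: comm_ring_1 mat"
  assumes A: "A \<in> carrier_mat s m" and B: "B \<in> carrier_mat m s" and K: "K \<subseteq> {0..<m}" "card K = s"
  shows "(\<Sum>p\<in>{p. p permutes {0..<s}}.
      (\<Prod>i=0..<s. A $$ (i, pick K (p i))) * det (mat\<^sub>r s s (\<lambda>i. row B (pick K (p i))))) =
    det (submatrix A {0..<s} K) * det (submatrix B K {0..<s})"
proof -
  define AK where "AK = submatrix A {0..<s} K"
  define BK where "BK = submatrix B K {0..<s}"
  have rows_s: "{i. i < s \<and> i \<in> {0..<s}} = {0..<s}" and cols_K: "{j. j < m \<and> j \<in> K} = K"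
    using K by auto
  have AK: "AK \<in> carrier_mat s s" and BK: "BK \<in> carrier_mat s s"
    using A B K by (simp_all add: AK_def BK_def submatrix_def rows_s cols_K)
  have AK_ij: "AK $$ (i,j) = A $$ (i, pick K j)" and BK_ij: "BK $$ (j,i) = B $$ (pick K j, i)"
    if "i < s" "j < s" for i j
    using A B K that by (simp_all add: AK_def BK_def submatrix_def rows_s cols_K pick_atLeastLessThan)
  have "(\<Prod>i=0..<s. A $$ (i, pick K (p i))) * det (mat\<^sub>r s s (\<lambda>i. row B (pick K (p i)))) =
      signof p * (\<Prod>i=0..<s. AK $$ (i, p i)) * det BK" if p: "p permutes {0..<s}" for p
  proof -
    have p_lt: "i < s \<Longrightarrow> p i < s" for i using permutes_in_image[OF p] by simp
    have "mat\<^sub>r s s (\<lambda>i. row B (pick K (p i))) = mat s s (\<lambda>(i,j). BK $$ (p i, j))"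
      by (rule eq_matI) (use B p_lt BK_ij in \<open>auto simp: row_def\<close>)
    then have "det (mat\<^sub>r s s (\<lambda>i. row B (pick K (p i)))) = signof p * det BK"
      using det_permute_rows[OF BK p] by simp
    moreover have "(\<Prod>i=0..<s. A $$ (i, pick K (p i))) = (\<Prod>i=0..<s. AK $$ (i, p i))"
      using p_lt AK_ij by (intro prod.cong) auto
    ultimately show ?thesis by simp
  qed
  then have "(\<Sum>p\<in>{p. p permutes {0..<s}}.
      (\<Prod>i=0..<s. A $$ (i, pick K (p i))) * det (mat\<^sub>r s s (\<lambda>i. row B (pick K (p i))))) =
      (\<Sum>p\<in>{p. p permutes {0..<s}}. signof p * (\<Prod>i=0..<s. AK $$ (i, p i))) * det BK"
    by (simp add: sum_distrib_right)
  also have "\<dots> = det AK * det BK" unfolding det_def'[OF AK] by simp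
  finally show ?thesis unfolding AK_def BK_def .
qed

theorem cauchy_binet:
  fixes A B :: "'a :: comm_ring_1 mat"
  assumes A: "A \<in> carrier_mat s m" and B: "B \<in> carrier_mat m s"
  shows "det (A * B) = (\<Sum>K\<in>{K. K \<subseteq> {0..<m} \<and> card K = s}.
            det (submatrix A {0..<s} K) * det (submatrix B K {0..<s}))"
proof -
  let ?Ks = "{K. K \<subseteq> {0..<m} \<and> card K = s}"
  let ?P = "{p. p permutes {0..<s}}"
  define g where "g f = (\<Prod>i=0..<s. A $$ (i, f i)) * det (mat\<^sub>r s s (\<lambda>i. row B (f i)))" for f
  have "det (A * B) = (\<Sum>(K, p)\<in>Sigma ?Ks (\<lambda>_. ?P). g (\<lambda>i. if i < s then pick K (p i) else i))"
    unfolding det_mult_sum_inj_rows[OF A B] g_def[symmetric]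
    by (rule sum.reindex_bij_betw[OF inj_maps_bij_subset_perm, symmetric, unfolded prod.case_distrib])
  also have "\<dots> = (\<Sum>K\<in>?Ks. \<Sum>p\<in>?P. g (\<lambda>i. if i < s then pick K (p i) else i))"
    by (subst sum.Sigma) (auto simp: finite_permutations intro: finite_subset[of _ "Pow {0..<m}"])
  also have "\<dots> = (\<Sum>K\<in>?Ks. \<Sum>p\<in>?P.
      (\<Prod>i=0..<s. A $$ (i, pick K (p i))) * det (mat\<^sub>r s s (\<lambda>i. row B (pick K (p i)))))"
  proof (intro sum.cong refl)
    fix K p
    have "(\<Prod>i=0..<s. A $$ (i, if i < s then pick K (p i) else i)) = (\<Prod>i=0..<s. A $$ (i, pick K (p i)))"
      by (rule prod.cong) auto
    moreover have "mat\<^sub>r s s (\<lambda>i. row B (if i < s then pick K (p i) else i)) =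
        mat\<^sub>r s s (\<lambda>i. row B (pick K (p i)))"
      by (rule eq_matI) auto
    ultimately show "g (\<lambda>i. if i < s then pick K (p i) else i) =
        (\<Prod>i=0..<s. A $$ (i, pick K (p i))) * det (mat\<^sub>r s s (\<lambda>i. row B (pick K (p i))))"
      unfolding g_def by simp
  qed
  also have "\<dots> = (\<Sum>K\<in>?Ks. det (submatrix A {0..<s} K) * det (submatrix B K {0..<s}))"
    using sum_permutes_pick_eq_det_minors[OF A B] by (intro sum.cong) auto
  finally show ?thesis .
qed

lemma rank_le_dim_row:
  assumes A: "(A :: real mat) \<in> carrier_mat n nc"
  shows "vec_space.rank n A \<le> n"
proof -
  interpret V: vec_space "TYPE(real)" n .
  have "set (cols A) \<subseteq> carrier_vec n" using A cols_dim by (metis carrier_matD(1))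
  then have "subspace class_ring (V.span (set (cols A))) V.V" by (rule V.span_is_subspace)
  then have "V.rank A \<le> V.dim"
    unfolding V.rank_def using V.subspace_dim V.fin_dim V.fin_dim_span_cols[OF A] by blast
  then show ?thesis using V.dim_is_n by simp
qed

section \<open>The Jacobian of the extended rate function\<close>

definition cmono :: "nat \<Rightarrow> (nat \<Rightarrow> real) \<Rightarrow> cplx \<Rightarrow> real" where
  "cmono n c y = (\<Prod>l<n. c l ^ y l)"

text \<open>The partial derivative of c^y in c(j), written with a division by c(j): it is only
  correct where c(j) \<noteq> 0.\<close>
definition dmono :: "nat \<Rightarrow> (nat \<Rightarrow> real) \<Rightarrow> cplx \<Rightarrow> nat \<Rightarrow> real" where
  "dmono n c y j = real (y j) * cmono n c y / c j"

definition rate_jac :: "nat \<Rightarrow> rxn set \<Rightarrow> (rxn \<Rightarrow> real) \<Rightarrow> (nat \<Rightarrow> real) \<Rightarrow> nat \<Rightarrow> nat \<Rightarrow> real" where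
  "rate_jac n Rs \<kappa> c i j = (\<Sum>r\<in>Rs. \<kappa> r * (real (snd r i) - real (fst r i)) * dmono n c (fst r) j)"

lemma has_real_derivative_cmono:
  assumes j: "j < n" and c: "c j \<noteq> 0"
  shows "((\<lambda>t. cmono n (c(j := t)) y) has_real_derivative dmono n c y j) (at (c j))"
proof -
  define P where "P = (\<Prod>l\<in>{..<n} - {j}. c l ^ y l)"
  have split: "cmono n (c(j := t)) y = P * t ^ y j" for t
  proof -
    have "cmono n (c(j := t)) y = (\<Prod>l\<in>{..<n} - {j}. (c(j := t)) l ^ y l) * t ^ y j"
      unfolding cmono_def using j by (subst prod.remove[of _ j]) (auto simp: mult.commute)
    also have "(\<Prod>l\<in>{..<n} - {j}. (c(j := t)) l ^ y l) = P" unfolding P_def by (rule prod.cong) auto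
    finally show ?thesis .
  qed
  have eq: "P * (real (y j) * c j ^ (y j - 1)) = dmono n c y j"
  proof (cases "y j")
    case (Suc k)
    then show ?thesis using c split[of "c j"] by (simp add: dmono_def)
  qed (simp add: dmono_def)
  have "((\<lambda>t. P * t ^ y j) has_real_derivative P * (real (y j) * c j ^ (y j - 1))) (at (c j))"
    by (auto intro!: derivative_eq_intros)
  then show ?thesis unfolding split eq .
qed

lemma partial_rate_fun:
  assumes "j < n" and "c j \<noteq> 0"
  shows "partial (\<lambda>x. rate_fun n Rs \<kappa> x i) c j = rate_jac n Rs \<kappa> c i j"
proof -
  have "((\<lambda>t. \<Sum>r\<in>Rs. \<kappa> r * cmono n (c(j := t)) (fst r) * (real (snd r i) - real (fst r i)))
      has_real_derivative (\<Sum>r\<in>Rs. \<kappa> r * dmono n c (fst r) j * (real (snd r i) - real (fst r i))))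
      (at (c j))"
    by (intro DERIV_sum DERIV_cmult DERIV_cmult_right has_real_derivative_cmono assms)
  then have "((\<lambda>t. rate_fun n Rs \<kappa> (c(j := t)) i) has_real_derivative rate_jac n Rs \<kappa> c i j) (at (c j))"
    unfolding rate_fun_def rate_jac_def cmono_def by (simp add: ac_simps)
  then show ?thesis unfolding partial_def by (rule DERIV_imp_deriv)
qed

lemma partial_linear:
  assumes "j < n"
  shows "partial (\<lambda>x. \<Sum>l<n. w l * x l) c j = w j"
proof -
  have "(\<lambda>t. \<Sum>l<n. w l * (c(j := t)) l) = (\<lambda>t. (\<Sum>l\<in>{..<n} - {j}. w l * c l) + w j * t)"
    using assms by (subst sum.remove[of _ j]) (auto intro!: sum.cong)
  moreover have "((\<lambda>t. (\<Sum>l\<in>{..<n} - {j}. w l * c l) + w j * t) has_real_derivative w j) (at (c j))"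
    by (auto intro!: derivative_eq_intros)
  ultimately show ?thesis unfolding partial_def by (simp add: DERIV_imp_deriv)
qed

lemma jacobian_ext_rate_fun:
  assumes "\<forall>i<n. c i > 0"
  shows "jacobian_mat n (ext_rate_fun n d \<omega> Rs \<kappa>) c =
    mat n n (\<lambda>(i,j). if i < d then \<omega> i j else rate_jac n Rs \<kappa> c i j)"
proof -
  have "c j \<noteq> 0" if "j < n" for j using assms that by (simp add: less_imp_neq[symmetric])
  then show ?thesis unfolding jacobian_mat_def ext_rate_fun_def
    by (intro eq_matI) (simp_all add: partial_linear partial_rate_fun)
qed

text \<open>The n \<times> s matrix V: column l is the vector whose last s coordinates are the l-th unit vector
  and whose first d coordinates are -\<omega>_i(d + l).  Since the basis is reduced, these columns are
  orthogonal to every \<omega>_i, so they span \<Gamma>.\<close>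
definition stoich_param :: "nat \<Rightarrow> (nat \<Rightarrow> nat \<Rightarrow> real) \<Rightarrow> nat \<Rightarrow> nat \<Rightarrow> real" where
  "stoich_param d \<omega> j l = (if j < d then - \<omega> j (d + l) else if j = d + l then 1 else 0)"

lemma reduced_row_stoich_param:
  assumes red: "\<forall>i<d. \<omega> i i = 1 \<and> (\<forall>j<d. j \<noteq> i \<longrightarrow> \<omega> i j = 0)" and i: "i < d" and l: "l < s"
  shows "(\<Sum>k<d + s. \<omega> i k * stoich_param d \<omega> k l) = 0"
proof -
  have "(\<Sum>k<d. \<omega> i k * stoich_param d \<omega> k l) = (\<Sum>k<d. if k = i then - \<omega> i (d + l) else 0)"
    using red i by (intro sum.cong) (auto simp: stoich_param_def)
  moreover have "(\<Sum>q<s. \<omega> i (d + q) * stoich_param d \<omega> (d + q) l) = (\<Sum>q<s. if q = l then \<omega> i (d + l) else 0)"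
    by (intro sum.cong) (auto simp: stoich_param_def)
  ultimately show ?thesis using i l by (simp add: sum_lessThan_add)
qed

definition reduction_mat :: "nat \<Rightarrow> nat \<Rightarrow> (nat \<Rightarrow> nat \<Rightarrow> real) \<Rightarrow> real mat" where
  "reduction_mat d s \<omega> = mat (d + s) (d + s)
     (\<lambda>(k,j). if j < d then (if k = j then 1 else 0) else stoich_param d \<omega> k (j - d))"

lemma det_reduction_mat: "det (reduction_mat d s \<omega>) = 1"
  by (rule det_upper_unitriangular[of _ "d + s"]) (auto simp: reduction_mat_def stoich_param_def)

lemma mult_reduction_mat:
  fixes M :: "real mat"
  assumes M: "M \<in> carrier_mat (d + s) (d + s)"
    and top: "\<And>i j. i < d \<Longrightarrow> j < d + s \<Longrightarrow> M $$ (i,j) = \<omega> i j"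
    and red: "\<forall>i<d. \<omega> i i = 1 \<and> (\<forall>j<d. j \<noteq> i \<longrightarrow> \<omega> i j = 0)"
  shows "M * reduction_mat d s \<omega> = four_block_mat (1\<^sub>m d) (0\<^sub>m d s) (mat s d (\<lambda>(a,j). M $$ (d + a, j)))
    (mat s s (\<lambda>(a,l). \<Sum>k<d + s. M $$ (d + a, k) * stoich_param d \<omega> k l))"
    (is "_ = four_block_mat _ _ ?C ?B")
proof (rule eq_matI)
  let ?n = "d + s"
  have M_eq: "M = mat ?n ?n (\<lambda>(i,j). M $$ (i,j))" using M by (auto intro!: eq_matI)
  fix i j assume "i < dim_row (four_block_mat (1\<^sub>m d) (0\<^sub>m d s) ?C ?B)"
    "j < dim_col (four_block_mat (1\<^sub>m d) (0\<^sub>m d s) ?C ?B)"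
  then have ij: "i < ?n" "j < ?n" by simp_all
  show "(M * reduction_mat d s \<omega>) $$ (i,j) = four_block_mat (1\<^sub>m d) (0\<^sub>m d s) ?C ?B $$ (i,j)"
  proof (cases "j < d")
    case True
    have "(M * reduction_mat d s \<omega>) $$ (i,j) = (\<Sum>k<?n. M $$ (i,k) * (if k = j then 1 else 0))"
      by (subst M_eq) (simp add: reduction_mat_def index_mult_mat_mat[OF ij] True)
    also have "\<dots> = (\<Sum>k<?n. if k = j then M $$ (i,k) else 0)" by (rule sum.cong) auto
    also have "\<dots> = M $$ (i,j)" using ij by simp
    finally show ?thesis using ij True top red by auto
  next
    case False
    have "(M * reduction_mat d s \<omega>) $$ (i,j) = (\<Sum>k<?n. M $$ (i,k) * stoich_param d \<omega> k (j - d))"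
      by (subst M_eq) (simp add: reduction_mat_def index_mult_mat_mat[OF ij] False)
    moreover have "(\<Sum>k<?n. M $$ (i,k) * stoich_param d \<omega> k (j - d)) = 0" if "i < d"
    proof -
      have "(\<Sum>k<?n. M $$ (i,k) * stoich_param d \<omega> k (j - d)) =
          (\<Sum>k<?n. \<omega> i k * stoich_param d \<omega> k (j - d))"
        using top that by (intro sum.cong) auto
      also have "\<dots> = 0" using reduced_row_stoich_param[OF red that] ij False by simp
      finally show ?thesis .
    qed
    ultimately show ?thesis using ij False by auto
  qed
qed (use M in \<open>simp_all add: reduction_mat_def\<close>)

lemma det_eq_det_reduced:
  fixes M :: "real mat"
  assumes M: "M \<in> carrier_mat (d + s) (d + s)"
    and top: "\<And>i j. i < d \<Longrightarrow> j < d + s \<Longrightarrow> M $$ (i,j) = \<omega> i j"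
    and red: "\<forall>i<d. \<omega> i i = 1 \<and> (\<forall>j<d. j \<noteq> i \<longrightarrow> \<omega> i j = 0)"
  shows "det M = det (mat s s (\<lambda>(a,l). \<Sum>k<d + s. M $$ (d + a, k) * stoich_param d \<omega> k l))"
proof -
  have U: "reduction_mat d s \<omega> \<in> carrier_mat (d + s) (d + s)" by (simp add: reduction_mat_def)
  have "det M = det (M * reduction_mat d s \<omega>)"
    using det_mult[OF M U] det_reduction_mat by simp
  also have "\<dots> = det (four_block_mat (1\<^sub>m d) (0\<^sub>m d s) (mat s d (\<lambda>(a,j). M $$ (d + a, j)))
      (mat s s (\<lambda>(a,l). \<Sum>k<d + s. M $$ (d + a, k) * stoich_param d \<omega> k l)))"
    using mult_reduction_mat[OF M top red] by simp
  also have "\<dots> = det (1\<^sub>m d :: real mat) * det (mat s s (\<lambda>(a,l). \<Sum>k<d + s. M $$ (d + a, k) * stoich_param d \<omega> k l))"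
    by (rule det_four_block_mat_upper_right_zero[OF one_carrier_mat refl mat_carrier mat_carrier])
  finally show ?thesis by simp
qed

lemma det_jacobian_ext_rate_fun:
  assumes c: "\<forall>i<n. c i > 0" and red: "\<forall>i<d. \<omega> i i = 1 \<and> (\<forall>j<d. j \<noteq> i \<longrightarrow> \<omega> i j = 0)"
    and n: "n = d + s"
  shows "det (jacobian_mat n (ext_rate_fun n d \<omega> Rs \<kappa>) c) =
    det (mat s s (\<lambda>(a,l). \<Sum>k<n. rate_jac n Rs \<kappa> c (d + a) k * stoich_param d \<omega> k l))"
proof -
  have "det (jacobian_mat n (ext_rate_fun n d \<omega> Rs \<kappa>) c) =
      det (mat n n (\<lambda>(i,j). if i < d then \<omega> i j else rate_jac n Rs \<kappa> c i j))"
    by (simp only: jacobian_ext_rate_fun[OF c])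
  also have "\<dots> = det (mat s s (\<lambda>(a,l). \<Sum>k<d + s.
      mat n n (\<lambda>(i,j). if i < d then \<omega> i j else rate_jac n Rs \<kappa> c i j) $$ (d + a, k) * stoich_param d \<omega> k l))"
    unfolding n by (rule det_eq_det_reduced[OF _ _ red]) auto
  also have "\<dots> = det (mat s s (\<lambda>(a,l). \<Sum>k<n. rate_jac n Rs \<kappa> c (d + a) k * stoich_param d \<omega> k l))"
    by (intro arg_cong[of _ _ det] eq_matI) (auto simp: n intro!: sum.cong)
  finally show ?thesis .
qed

section \<open>Reaction vectors\<close>

definition gcol :: "rxn \<Rightarrow> nat \<Rightarrow> real" where
  "gcol r j = real (fst r j) - real (snd r j)"

lemma gcol_outflow: "gcol (outflow i) j = (if j = i then 1 else 0)"
  by (simp add: gcol_def outflow_def)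

lemma fst_outflow: "real (fst (outflow j) i) = (if i = j then 1 else 0)"
  by (simp add: outflow_def)

lemma outflow_inj: "outflow i = outflow j \<Longrightarrow> i = j"
  by (metis gcol_outflow zero_neq_one)

lemma orthogonal_gcol_iff:
  "(\<Sum>j<n. v j * (real (snd r j) - real (fst r j))) = 0 \<longleftrightarrow> (\<Sum>j<n. v j * gcol r j) = 0"
proof -
  have "(\<Sum>j<n. v j * (real (snd r j) - real (fst r j))) = - (\<Sum>j<n. v j * gcol r j)"
    by (simp add: gcol_def sum_negf[symmetric] algebra_simps)
  then show ?thesis by simp
qed

lemma gcol_eq_stoich_param_comb:
  assumes orth: "\<forall>i<d. \<forall>r\<in>Rs. (\<Sum>j<d + s. \<omega> i j * (real (snd r j) - real (fst r j))) = 0"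
    and red: "\<forall>i<d. \<omega> i i = 1 \<and> (\<forall>j<d. j \<noteq> i \<longrightarrow> \<omega> i j = 0)"
    and r: "r \<in> Rs" and j: "j < d + s"
  shows "gcol r j = (\<Sum>q<s. stoich_param d \<omega> j q * gcol r (d + q))"
proof (cases "j < d")
  case True
  have "0 = (\<Sum>t<d + s. \<omega> j t * gcol r t)" using orth True r orthogonal_gcol_iff by metis
  also have "\<dots> = gcol r j + (\<Sum>q<s. \<omega> j (d + q) * gcol r (d + q))"
  proof -
    have "(\<Sum>t<d. \<omega> j t * gcol r t) = (\<Sum>t<d. if t = j then gcol r t else 0)"
      using red True by (intro sum.cong) auto
    then show ?thesis using True by (simp add: sum_lessThan_add)
  qed
  finally show ?thesis using True by (simp add: stoich_param_def sum_negf eq_neg_iff_add_eq_0)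
next
  case False
  have "(\<Sum>q<s. stoich_param d \<omega> j q * gcol r (d + q)) = (\<Sum>q<s. if q = j - d then gcol r (d + q) else 0)"
    using False by (intro sum.cong) (auto simp: stoich_param_def)
  then show ?thesis using False j by simp
qed

text \<open>If S_i \<rightarrow> 0 is a reaction then \<omega>_k(i) = 0 for all k, so column i - d of V is the unit
  vector at row i.\<close>
lemma det_stoich_param_minor_outflow:
  assumes orth: "\<forall>i<d. \<forall>r\<in>Rs. (\<Sum>j<d + s. \<omega> i j * (real (snd r j) - real (fst r j))) = 0"
    and red: "\<forall>i<d. \<omega> i i = 1 \<and> (\<forall>j<d. j \<noteq> i \<longrightarrow> \<omega> i j = 0)"
    and J: "J \<subseteq> {0..<d + s}" "card J = s"
    and i: "i < d + s" "i \<notin> J" and out: "outflow i \<in> Rs"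
  shows "det (mat s s (\<lambda>(b,l). stoich_param d \<omega> (pick J b) l)) = 0"
proof -
  have \<omega>_col: "\<omega> k i = 0" if "k < d" for k
  proof -
    have "(\<Sum>j<d + s. \<omega> k j * gcol (outflow i) j) = (\<Sum>j<d + s. if j = i then \<omega> k j else 0)"
      by (intro sum.cong) (auto simp: gcol_outflow)
    then have "(\<Sum>j<d + s. \<omega> k j * gcol (outflow i) j) = \<omega> k i" using i by simp
    then show ?thesis using orth that out orthogonal_gcol_iff by metis
  qed
  then have "\<not> i < d" using red by fastforce
  then have col_zero: "stoich_param d \<omega> j (i - d) = 0" if "j \<noteq> i" for j
    using \<omega>_col that by (auto simp: stoich_param_def)
  have "mat s s (\<lambda>(b,l). stoich_param d \<omega> (pick J b) l) $$ (b, i - d) = 0" if "b < s" for b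
  proof -
    have "pick J b \<in> J" using pick_in_set_le[of b J] J that by simp
    then show ?thesis using col_zero[of "pick J b"] i that by auto
  qed
  moreover have "i - d < s" using i \<open>\<not> i < d\<close> by arith
  ultimately show ?thesis
    using laplace_expansion_column[of "mat s s (\<lambda>(b,l). stoich_param d \<omega> (pick J b) l)" s "i - d"]
    by simp
qed

lemma det_stoich_param_minor_mult:
  assumes orth: "\<forall>i<d. \<forall>r\<in>Rs. (\<Sum>j<d + s. \<omega> i j * (real (snd r j) - real (fst r j))) = 0"
    and red: "\<forall>i<d. \<omega> i i = 1 \<and> (\<forall>j<d. j \<noteq> i \<longrightarrow> \<omega> i j = 0)"
    and J: "J \<subseteq> {0..<d + s}" "card J = s" and xs: "set xs \<subseteq> Rs" "length xs = s"
  shows "det (mat s s (\<lambda>(b,l). stoich_param d \<omega> (pick J b) l)) * det (mat s s (\<lambda>(a,l). gcol (xs ! l) (d + a)))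
       = det (mat s s (\<lambda>(b,a). gcol (xs ! a) (pick J b)))"
proof -
  have "mat s s (\<lambda>(b,a). gcol (xs ! a) (pick J b)) =
      mat s s (\<lambda>(b,l). stoich_param d \<omega> (pick J b) l) * mat s s (\<lambda>(a,l). gcol (xs ! l) (d + a))"
  proof (rule eq_matI)
    fix b a assume "b < dim_row (mat s s (\<lambda>(b,l). stoich_param d \<omega> (pick J b) l) * mat s s (\<lambda>(a,l). gcol (xs ! l) (d + a)))"
      "a < dim_col (mat s s (\<lambda>(b,l). stoich_param d \<omega> (pick J b) l) * mat s s (\<lambda>(a,l). gcol (xs ! l) (d + a)))"
    then have ba: "b < s" "a < s" by simp_all
    have "xs ! a \<in> Rs" "pick J b < d + s" using xs ba J pick_less_bound by auto
    then have "gcol (xs ! a) (pick J b) = (\<Sum>q<s. stoich_param d \<omega> (pick J b) q * gcol (xs ! a) (d + q))"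
      by (rule gcol_eq_stoich_param_comb[OF orth red])
    then show "mat s s (\<lambda>(b,a). gcol (xs ! a) (pick J b)) $$ (b,a) =
      (mat s s (\<lambda>(b,l). stoich_param d \<omega> (pick J b) l) * mat s s (\<lambda>(a,l). gcol (xs ! l) (d + a))) $$ (b,a)"
      using ba by (subst index_mult_mat_mat[OF ba]) simp
  qed simp_all
  then show ?thesis by (simp add: det_mult[OF mat_carrier mat_carrier])
qed

section \<open>The coefficients of the determinant\<close>

lemma det_dmono_minor:
  assumes J: "J \<subseteq> {0..<n}" "card J = s" and xs: "distinct xs" "length xs = s"
  shows "det (mat s s (\<lambda>(a,b). dmono n c (fst (xs ! a)) (pick J b))) =
     (\<Prod>j\<in>J. inverse (c j)) * (\<Prod>r\<in>set xs. cmono n c (fst r)) *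
     det (mat s s (\<lambda>(b,a). real (fst (xs ! a) (pick J b))))"
proof -
  define Y where "Y = mat s s (\<lambda>(b,a). real (fst (xs ! a) (pick J b)))"
  have "det (mat s s (\<lambda>(a,b). dmono n c (fst (xs ! a)) (pick J b))) =
      det (transpose_mat (mat s s (\<lambda>(a,b). dmono n c (fst (xs ! a)) (pick J b))))"
    by (rule det_transpose[symmetric, where n = s]) simp
  also have "transpose_mat (mat s s (\<lambda>(a,b). dmono n c (fst (xs ! a)) (pick J b))) =
      mat s s (\<lambda>(b,a). (inverse (c (pick J b)) * cmono n c (fst (xs ! a))) * Y $$ (b,a))"
    by (rule eq_matI) (simp_all add: Y_def dmono_def divide_inverse)
  also have "det \<dots> = (\<Prod>b=0..<s. inverse (c (pick J b))) * (\<Prod>a=0..<s. cmono n c (fst (xs ! a))) * det Y"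
    by (rule det_scale_rows_cols) (simp add: Y_def)
  also have "(\<Prod>b=0..<s. inverse (c (pick J b))) = (\<Prod>j\<in>J. inverse (c j))"
    using prod_pick[of J "\<lambda>j. inverse (c j)"] J finite_subset[OF J(1)] by (simp add: atLeast0LessThan)
  also have "(\<Prod>a=0..<s. cmono n c (fst (xs ! a))) = (\<Prod>r\<in>set xs. cmono n c (fst r))"
    using prod_nth[OF xs(1), of "\<lambda>r. cmono n c (fst r)"] xs(2) by (simp add: atLeast0LessThan)
  finally show ?thesis unfolding Y_def .
qed

lemma prod_inverse_mult_prod_subset:
  fixes f :: "'a \<Rightarrow> 'b :: field"
  assumes "finite A" and "I \<subseteq> A" and "\<forall>i\<in>I. f i \<noteq> 0"
  shows "(\<Prod>j\<in>A. inverse (f j)) * (\<Prod>i\<in>I. f i) = (\<Prod>j\<in>A - I. inverse (f j))"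
proof -
  have "(\<Prod>j\<in>I. inverse (f j)) * (\<Prod>i\<in>I. f i) = 1"
    using assms(3) by (subst prod.distrib[symmetric]) (auto intro: prod.neutral)
  then show ?thesis
    using prod.subset_diff[OF assms(2,1), of "\<lambda>j. inverse (f j)"] by (simp add: mult.assoc)
qed

lemma cpow_eq_prod_inverse_cmono:
  assumes c: "\<forall>i<n. c i > 0"
  shows "cpow n c (\<lambda>j. -1 + (\<Sum>r\<in>R. int (fst r j))) = (\<Prod>j<n. inverse (c j)) * (\<Prod>r\<in>R. cmono n c (fst r))"
proof -
  have "c j powi (-1 + (\<Sum>r\<in>R. int (fst r j))) = inverse (c j) * (\<Prod>r\<in>R. c j ^ fst r j)" if "j < n" for j
  proof -
    have "c j \<noteq> 0" using c that by auto
    then have "c j powi (-1 + (\<Sum>r\<in>R. int (fst r j))) = c j powi (-1) * c j powi (\<Sum>r\<in>R. int (fst r j))"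
      by (rule power_int_add[OF disjI1])
    moreover have "c j powi (\<Sum>r\<in>R. int (fst r j)) = (\<Prod>r\<in>R. c j ^ fst r j)"
    proof -
      have "(\<Sum>r\<in>R. int (fst r j)) = int (\<Sum>r\<in>R. fst r j)" by simp
      then show ?thesis by (simp only: power_int_of_nat power_sum)
    qed
    ultimately show ?thesis by (simp add: power_int_minus)
  qed
  then have "cpow n c (\<lambda>j. -1 + (\<Sum>r\<in>R. int (fst r j))) = (\<Prod>j<n. inverse (c j) * (\<Prod>r\<in>R. c j ^ fst r j))"
    unfolding cpow_def by (intro prod.cong) auto
  also have "\<dots> = (\<Prod>j<n. inverse (c j)) * (\<Prod>r\<in>R. cmono n c (fst r))"
    unfolding prod.distrib cmono_def by (subst prod.swap) (rule refl)
  finally show ?thesis .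
qed

lemma cpow_mult_prod_Od:
  assumes c: "\<forall>i<n. c i > 0" and I: "I \<subseteq> {0..<n}"
  shows "cpow n c (\<lambda>j. -1 + (\<Sum>r\<in>R. int (fst r j))) * (\<Prod>i\<in>I. c i) =
    (\<Prod>j\<in>{0..<n} - I. inverse (c j)) * (\<Prod>r\<in>R. cmono n c (fst r))"
proof -
  have "cpow n c (\<lambda>j. -1 + (\<Sum>r\<in>R. int (fst r j))) * (\<Prod>i\<in>I. c i) =
      ((\<Prod>j\<in>{0..<n}. inverse (c j)) * (\<Prod>i\<in>I. c i)) * (\<Prod>r\<in>R. cmono n c (fst r))"
    unfolding cpow_eq_prod_inverse_cmono[OF c] by (simp add: atLeast0LessThan ac_simps)
  also have "(\<Prod>j\<in>{0..<n}. inverse (c j)) * (\<Prod>i\<in>I. c i) = (\<Prod>j\<in>{0..<n} - I. inverse (c j))"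
    using c I by (intro prod_inverse_mult_prod_subset) force+
  finally show ?thesis .
qed

lemma enum_rxns:
  assumes "finite R"
  shows "distinct (enum_rxns R)" "set (enum_rxns R) = R" "length (enum_rxns R) = card R"
proof -
  have "distinct (enum_rxns R) \<and> set (enum_rxns R) = R"
    unfolding enum_rxns_def by (rule someI_ex) (use finite_distinct_list[OF assms] in blast)
  then show "distinct (enum_rxns R)" "set (enum_rxns R) = R" by auto
  then show "length (enum_rxns R) = card R" by (metis distinct_card)
qed

lemma Ymat_Gmat_enum:
  assumes "finite R"
  shows "Ymat n R = mat n (card R) (\<lambda>(i,k). real (fst (enum_rxns R ! k) i))"
    and "Gmat n R = mat n (card R) (\<lambda>(i,k). gcol (enum_rxns R ! k) i)"
  using enum_rxns(3)[OF assms] by (simp_all add: Ymat_def Gmat_def gcol_def Let_def)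

lemma del_rows_Ymat_Gmat:
  assumes "finite R" "card R = s" and I: "I \<subseteq> {0..<n}" "card I = d" and n: "n = d + s"
  shows "del_rows (Ymat n R) I = mat s s (\<lambda>(b,a). real (fst (enum_rxns R ! a) (pick ({0..<n} - I) b)))"
    "del_rows (Gmat n R) I = mat s s (\<lambda>(b,a). gcol (enum_rxns R ! a) (pick ({0..<n} - I) b))"
proof -
  have rows: "n - card I = s" using I(2) n by simp
  show "del_rows (Ymat n R) I = mat s s (\<lambda>(b,a). real (fst (enum_rxns R ! a) (pick ({0..<n} - I) b)))"
    "del_rows (Gmat n R) I = mat s s (\<lambda>(b,a). gcol (enum_rxns R ! a) (pick ({0..<n} - I) b))"
    unfolding Ymat_Gmat_enum[OF assms(1)] assms(2) by (simp_all add: del_rows_mat[OF I(1)] rows)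
qed

lemma sum_subsets_compl_Od:
  assumes n: "n = d + s"
    and vanish: "\<And>J i. J \<subseteq> {0..<n} \<Longrightarrow> card J = s \<Longrightarrow> i < n \<Longrightarrow> i \<notin> J \<Longrightarrow> outflow i \<in> Rs \<Longrightarrow> f J = 0"
  shows "(\<Sum>J\<in>{J. J \<subseteq> {0..<n} \<and> card J = s}. f J) = (\<Sum>I\<in>Od n Rs d. f ({0..<n} - I))"
proof -
  let ?Js = "{J. J \<subseteq> {0..<n} \<and> card J = s}"
  have Od: "I \<subseteq> {0..<n}" "card I = d" if "I \<in> Od n Rs d" for I
    using that unfolding Od_def Oset_def by auto
  have card_compl: "card ({0..<n} - K) = n - card K" if "K \<subseteq> {0..<n}" for K
    using that by (simp add: card_Diff_subset finite_subset)
  have "sum f ?Js = sum f ((\<lambda>I. {0..<n} - I) ` Od n Rs d)"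
  proof (rule sum.mono_neutral_right)
    show "finite ?Js" by (rule finite_subset[of _ "Pow {0..<n}"]) auto
    show "(\<lambda>I. {0..<n} - I) ` Od n Rs d \<subseteq> ?Js" using Od card_compl n by auto
    show "\<forall>J \<in> ?Js - (\<lambda>I. {0..<n} - I) ` Od n Rs d. f J = 0"
    proof
      fix J assume J: "J \<in> ?Js - (\<lambda>I. {0..<n} - I) ` Od n Rs d"
      then have sub: "J \<subseteq> {0..<n}" "card J = s" by auto
      have "{0..<n} - J \<notin> Od n Rs d"
      proof
        assume "{0..<n} - J \<in> Od n Rs d"
        moreover have "J = {0..<n} - ({0..<n} - J)" using sub by auto
        ultimately show False using J by blast
      qed
      then have "\<not> {0..<n} - J \<subseteq> Oset n Rs" using card_compl[OF sub(1)] sub n by (auto simp: Od_def)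
      then obtain i where "i < n" "i \<notin> J" "outflow i \<in> Rs" unfolding Oset_def by auto
      then show "f J = 0" using vanish sub by blast
    qed
  qed
  also have "\<dots> = sum (f \<circ> (\<lambda>I. {0..<n} - I)) (Od n Rs d)"
  proof (rule sum.reindex, rule inj_onI)
    fix I I' assume "I \<in> Od n Rs d" "I' \<in> Od n Rs d" "{0..<n} - I = {0..<n} - I'"
    then show "I = I'" using Od by blast
  qed
  finally show ?thesis by simp
qed

definition jacobian_coeff :: "nat \<Rightarrow> rxn set \<Rightarrow> nat \<Rightarrow> nat \<Rightarrow> (nat \<Rightarrow> real) \<Rightarrow> rxn set \<Rightarrow> real" where
  "jacobian_coeff n Rs d s c R =
     (-1) ^ s * cpow n c (\<lambda>j. -1 + (\<Sum>r\<in>R. int (fst r j))) *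
     (\<Sum>I\<in>Od n Rs d. det (del_rows (Ymat n R) I) * det (del_rows (Gmat n R) I) * (\<Prod>i\<in>I. c i))"

lemma det_minors_mult_gamma_eq_cpow:
  assumes c: "\<forall>i<n. c i > 0"
    and orth: "\<forall>i<d. \<forall>r\<in>Rs. (\<Sum>j<d + s. \<omega> i j * (real (snd r j) - real (fst r j))) = 0"
    and red: "\<forall>i<d. \<omega> i i = 1 \<and> (\<forall>j<d. j \<noteq> i \<longrightarrow> \<omega> i j = 0)"
    and n: "n = d + s" and xs: "distinct xs" "set xs \<subseteq> Rs" "length xs = s"
    and I: "I \<subseteq> {0..<n}" "card I = d"
  defines "J \<equiv> {0..<n} - I"
  shows "det (mat s s (\<lambda>(a,b). dmono n c (fst (xs ! a)) (pick J b))) *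
      det (mat s s (\<lambda>(b,l). stoich_param d \<omega> (pick J b) l)) * det (mat s s (\<lambda>(a,l). gcol (xs ! l) (d + a))) =
    cpow n c (\<lambda>j. -1 + (\<Sum>r\<in>set xs. int (fst r j))) *
      (det (del_rows (Ymat n (set xs)) I) * det (del_rows (Gmat n (set xs)) I) * (\<Prod>i\<in>I. c i))"
proof -
  have J_sub: "J \<subseteq> {0..<n}" "card J = s" using I n unfolding J_def by (auto simp: card_Diff_subset finite_subset)
  define Y where "Y = det (mat s s (\<lambda>(b,a). real (fst (xs ! a) (pick J b))))"
  define G where "G = det (mat s s (\<lambda>(b,a). gcol (xs ! a) (pick J b)))"
  have "det (mat s s (\<lambda>(a,b). dmono n c (fst (xs ! a)) (pick J b))) *
      det (mat s s (\<lambda>(b,l). stoich_param d \<omega> (pick J b) l)) * det (mat s s (\<lambda>(a,l). gcol (xs ! l) (d + a))) =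
      (\<Prod>j\<in>J. inverse (c j)) * (\<Prod>r\<in>set xs. cmono n c (fst r)) * (Y * G)"
    using det_dmono_minor[OF J_sub xs(1,3)] det_stoich_param_minor_mult[OF orth red _ _ xs(2,3)] J_sub n
    unfolding Y_def G_def by (simp add: ac_simps)
  also have "(\<Prod>j\<in>J. inverse (c j)) * (\<Prod>r\<in>set xs. cmono n c (fst r)) =
      cpow n c (\<lambda>j. -1 + (\<Sum>r\<in>set xs. int (fst r j))) * (\<Prod>i\<in>I. c i)"
    unfolding J_def by (rule cpow_mult_prod_Od[OF c I(1), symmetric])
  also have "Y * G = det (del_rows (Ymat n (set xs)) I) * det (del_rows (Gmat n (set xs)) I)"
  proof -
    have card: "card (set xs) = s" using xs distinct_card by metis
    show ?thesis
      unfolding del_rows_Ymat_Gmat[OF finite_set card I n] Y_def G_def J_def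
      by (rule det_mult_det_reorder_cols[OF xs(1) enum_rxns(1)[OF finite_set]
            enum_rxns(2)[OF finite_set, of xs, symmetric] xs(3), symmetric])
  qed
  finally show ?thesis by (simp add: ac_simps)
qed

lemma jacobian_coeff_list:
  assumes c: "\<forall>i<n. c i > 0"
    and orth: "\<forall>i<d. \<forall>r\<in>Rs. (\<Sum>j<n. \<omega> i j * (real (snd r j) - real (fst r j))) = 0"
    and red: "\<forall>i<d. \<omega> i i = 1 \<and> (\<forall>j<d. j \<noteq> i \<longrightarrow> \<omega> i j = 0)"
    and n: "n = d + s" and xs: "distinct xs" "set xs \<subseteq> Rs" "length xs = s"
  shows "(-1) ^ s * det (mat s s (\<lambda>(a,l). gcol (xs ! l) (d + a))) *
      det (mat s n (\<lambda>(a,j). dmono n c (fst (xs ! a)) j) * mat n s (\<lambda>(j,l). stoich_param d \<omega> j l)) =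
    jacobian_coeff n Rs d s c (set xs)"
proof -
  have orth': "\<forall>i<d. \<forall>r\<in>Rs. (\<Sum>j<d + s. \<omega> i j * (real (snd r j) - real (fst r j))) = 0"
    using orth n by simp
  define H where "H J = det (mat s s (\<lambda>(a,b). dmono n c (fst (xs ! a)) (pick J b)))" for J
  define V where "V J = det (mat s s (\<lambda>(b,l). stoich_param d \<omega> (pick J b) l))" for J
  let ?Js = "{J. J \<subseteq> {0..<n} \<and> card J = s}"
  have "det (mat s n (\<lambda>(a,j). dmono n c (fst (xs ! a)) j) * mat n s (\<lambda>(j,l). stoich_param d \<omega> j l)) =
      (\<Sum>J\<in>?Js. H J * V J)"
    unfolding cauchy_binet[OF mat_carrier mat_carrier]
  proof (rule sum.cong[OF refl])
    fix J assume "J \<in> ?Js"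
    then have J: "J \<subseteq> {0..<n}" "card J = s" by auto
    show "det (submatrix (mat s n (\<lambda>(a,j). dmono n c (fst (xs ! a)) j)) {0..<s} J) *
        det (submatrix (mat n s (\<lambda>(j,l). stoich_param d \<omega> j l)) J {0..<s}) = H J * V J"
      unfolding submatrix_mat_all_rows[OF J(1)] submatrix_mat_all_cols[OF J(1)] H_def V_def J(2) by simp
  qed
  also have "\<dots> = (\<Sum>I\<in>Od n Rs d. H ({0..<n} - I) * V ({0..<n} - I))"
    using det_stoich_param_minor_outflow[OF orth' red] n by (intro sum_subsets_compl_Od[OF n]) (auto simp: V_def)
  finally have "(-1) ^ s * det (mat s s (\<lambda>(a,l). gcol (xs ! l) (d + a))) *
      det (mat s n (\<lambda>(a,j). dmono n c (fst (xs ! a)) j) * mat n s (\<lambda>(j,l). stoich_param d \<omega> j l)) =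
      (-1) ^ s * (\<Sum>I\<in>Od n Rs d. H ({0..<n} - I) * V ({0..<n} - I) * det (mat s s (\<lambda>(a,l). gcol (xs ! l) (d + a))))"
    by (simp add: sum_distrib_left sum_distrib_right mult_ac)
  also have "(\<Sum>I\<in>Od n Rs d. H ({0..<n} - I) * V ({0..<n} - I) * det (mat s s (\<lambda>(a,l). gcol (xs ! l) (d + a)))) =
      (\<Sum>I\<in>Od n Rs d. cpow n c (\<lambda>j. -1 + (\<Sum>r\<in>set xs. int (fst r j))) *
        (det (del_rows (Ymat n (set xs)) I) * det (del_rows (Gmat n (set xs)) I) * (\<Prod>i\<in>I. c i)))"
  proof (rule sum.cong[OF refl])
    fix I assume "I \<in> Od n Rs d"
    then have "I \<subseteq> {0..<n}" "card I = d" unfolding Od_def Oset_def by auto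
    then show "H ({0..<n} - I) * V ({0..<n} - I) * det (mat s s (\<lambda>(a,l). gcol (xs ! l) (d + a))) =
        cpow n c (\<lambda>j. -1 + (\<Sum>r\<in>set xs. int (fst r j))) *
        (det (del_rows (Ymat n (set xs)) I) * det (del_rows (Gmat n (set xs)) I) * (\<Prod>i\<in>I. c i))"
      unfolding H_def V_def by (rule det_minors_mult_gamma_eq_cpow[OF c orth' red n xs])
  qed
  also have "(-1) ^ s * \<dots> = jacobian_coeff n Rs d s c (set xs)"
    unfolding jacobian_coeff_def by (simp add: sum_distrib_left mult.assoc)
  finally show ?thesis .
qed

lemma reduced_rate_jac_factor:
  assumes rs: "distinct rs" "set rs = Rs"
  shows "mat s s (\<lambda>(a,l). \<Sum>k<n. rate_jac n Rs \<kappa> c (d + a) k * stoich_param d \<omega> k l) =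
    mat s (length rs) (\<lambda>(a,k). - (\<kappa> (rs ! k) * gcol (rs ! k) (d + a))) *
    mat (length rs) s (\<lambda>(k,l). \<Sum>j<n. dmono n c (fst (rs ! k)) j * stoich_param d \<omega> j l)"
    (is "_ = ?GK * ?HV")
proof (rule eq_matI)
  let ?m = "length rs"
  fix a l assume "a < dim_row (?GK * ?HV)" "l < dim_col (?GK * ?HV)"
  then have al: "a < s" "l < s" by simp_all
  have jac: "rate_jac n Rs \<kappa> c (d + a) j =
      (\<Sum>k<?m. - (\<kappa> (rs ! k) * gcol (rs ! k) (d + a)) * dmono n c (fst (rs ! k)) j)" for j
    unfolding rate_jac_def rs(2)[symmetric] by (simp add: sum_nth[OF rs(1)] gcol_def algebra_simps)
  have "(?GK * ?HV) $$ (a,l) = (\<Sum>k<?m. - (\<kappa> (rs ! k) * gcol (rs ! k) (d + a)) *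
      (\<Sum>j<n. dmono n c (fst (rs ! k)) j * stoich_param d \<omega> j l))"
    by (subst index_mult_mat_mat[OF al]) simp
  also have "\<dots> = (\<Sum>j<n. \<Sum>k<?m. - (\<kappa> (rs ! k) * gcol (rs ! k) (d + a)) *
      dmono n c (fst (rs ! k)) j * stoich_param d \<omega> j l)"
    unfolding sum_distrib_left by (subst sum.swap) (simp add: mult.assoc)
  also have "\<dots> = (\<Sum>j<n. rate_jac n Rs \<kappa> c (d + a) j * stoich_param d \<omega> j l)"
    by (simp add: jac sum_distrib_right)
  finally show "mat s s (\<lambda>(a,l). \<Sum>k<n. rate_jac n Rs \<kappa> c (d + a) k * stoich_param d \<omega> k l) $$ (a,l) =
      (?GK * ?HV) $$ (a,l)"
    using al by simp
qed simp_all

lemma det_factor_minors_eq_coeff: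
  assumes c: "\<forall>i<n. c i > 0"
    and orth: "\<forall>i<d. \<forall>r\<in>Rs. (\<Sum>j<n. \<omega> i j * (real (snd r j) - real (fst r j))) = 0"
    and red: "\<forall>i<d. \<omega> i i = 1 \<and> (\<forall>j<d. j \<noteq> i \<longrightarrow> \<omega> i j = 0)"
    and n: "n = d + s" and rs: "distinct rs" "set rs = Rs"
    and K: "K \<subseteq> {0..<length rs}" "card K = s"
  shows "det (submatrix (mat s (length rs) (\<lambda>(a,k). - (\<kappa> (rs ! k) * gcol (rs ! k) (d + a)))) {0..<s} K) *
      det (submatrix (mat (length rs) s (\<lambda>(k,l). \<Sum>j<n. dmono n c (fst (rs ! k)) j * stoich_param d \<omega> j l))
        K {0..<s}) =
    jacobian_coeff n Rs d s c ((!) rs ` K) * (\<Prod>r\<in>(!) rs ` K. \<kappa> r)"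
proof -
  define xs where "xs = map (\<lambda>a. rs ! pick K a) [0..<s]"
  have xs: "distinct xs" "set xs = (!) rs ` K" "length xs = s"
    using map_nth_pick[OF rs(1) K] unfolding xs_def by auto
  have nth: "xs ! a = rs ! pick K a" if "a < s" for a using that unfolding xs_def by simp
  have xs_Rs: "set xs \<subseteq> Rs" using xs(2) K rs(2) by auto
  have "submatrix (mat s (length rs) (\<lambda>(a,k). - (\<kappa> (rs ! k) * gcol (rs ! k) (d + a)))) {0..<s} K =
      mat s s (\<lambda>(a,b). ((\<lambda>_. -1) a * \<kappa> (xs ! b)) * mat s s (\<lambda>(a,l). gcol (xs ! l) (d + a)) $$ (a,b))"
    unfolding submatrix_mat_all_rows[OF K(1)] K(2) by (rule eq_matI) (simp_all add: nth)
  then have "det (submatrix (mat s (length rs) (\<lambda>(a,k). - (\<kappa> (rs ! k) * gcol (rs ! k) (d + a)))) {0..<s} K) =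
      prod (\<lambda>_. -1) {0..<s} * prod (\<lambda>b. \<kappa> (xs ! b)) {0..<s} * det (mat s s (\<lambda>(a,l). gcol (xs ! l) (d + a)))"
    by (simp only: det_scale_rows_cols[OF mat_carrier])
  also have "\<dots> = (-1) ^ s * (\<Prod>r\<in>set xs. \<kappa> r) * det (mat s s (\<lambda>(a,l). gcol (xs ! l) (d + a)))"
    by (simp add: prod_nth[OF xs(1)] xs(3) atLeast0LessThan)
  finally have GK: "det (submatrix (mat s (length rs) (\<lambda>(a,k). - (\<kappa> (rs ! k) * gcol (rs ! k) (d + a)))) {0..<s} K) =
      (-1) ^ s * (\<Prod>r\<in>set xs. \<kappa> r) * det (mat s s (\<lambda>(a,l). gcol (xs ! l) (d + a)))" .
  define HV where "HV = mat (length rs) s (\<lambda>(k,l). \<Sum>j<n. dmono n c (fst (rs ! k)) j * stoich_param d \<omega> j l)"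
  have "submatrix HV K {0..<s} =
      mat s n (\<lambda>(a,j). dmono n c (fst (xs ! a)) j) * mat n s (\<lambda>(j,l). stoich_param d \<omega> j l)"
    (is "_ = ?H * ?V")
  proof (rule eq_matI)
    fix a l assume "a < dim_row (?H * ?V)" "l < dim_col (?H * ?V)"
    then have al: "a < s" "l < s" by simp_all
    show "submatrix HV K {0..<s} $$ (a,l) = (?H * ?V) $$ (a,l)"
      unfolding HV_def submatrix_mat_all_cols[OF K(1)] K(2) by (subst index_mult_mat_mat[OF al]) (simp add: al nth)
  qed (simp_all add: HV_def submatrix_mat_all_cols[OF K(1)] K(2))
  then show ?thesis
    using jacobian_coeff_list[OF c orth red n xs(1) xs_Rs xs(3)] unfolding GK xs(2) HV_def[symmetric]
    by (simp add: ac_simps)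
qed

theorem det_reduced_rate_jac_expansion:
  assumes fin: "finite Rs" and c: "\<forall>i<n. c i > 0"
    and orth: "\<forall>i<d. \<forall>r\<in>Rs. (\<Sum>j<n. \<omega> i j * (real (snd r j) - real (fst r j))) = 0"
    and red: "\<forall>i<d. \<omega> i i = 1 \<and> (\<forall>j<d. j \<noteq> i \<longrightarrow> \<omega> i j = 0)"
    and n: "n = d + s"
  shows "det (mat s s (\<lambda>(a,l). \<Sum>k<n. rate_jac n Rs \<kappa> c (d + a) k * stoich_param d \<omega> k l)) =
    (\<Sum>R\<in>{R. R \<subseteq> Rs \<and> card R = s}. jacobian_coeff n Rs d s c R * (\<Prod>r\<in>R. \<kappa> r))"
proof -
  define rs where "rs = enum_rxns Rs"
  have rs: "distinct rs" "set rs = Rs" using enum_rxns[OF fin] unfolding rs_def by auto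
  have "det (mat s s (\<lambda>(a,l). \<Sum>k<n. rate_jac n Rs \<kappa> c (d + a) k * stoich_param d \<omega> k l)) =
      (\<Sum>K\<in>{K. K \<subseteq> {0..<length rs} \<and> card K = s}. jacobian_coeff n Rs d s c ((!) rs ` K) * (\<Prod>r\<in>(!) rs ` K. \<kappa> r))"
    unfolding reduced_rate_jac_factor[OF rs] cauchy_binet[OF mat_carrier mat_carrier]
    using det_factor_minors_eq_coeff[OF c orth red n rs] by (intro sum.cong) auto
  also have "\<dots> = (\<Sum>R\<in>{R. R \<subseteq> Rs \<and> card R = s}. jacobian_coeff n Rs d s c R * (\<Prod>r\<in>R. \<kappa> r))"
  proof (rule sum.reindex_bij_betw[OF bij_betw_image_card_subsets])
    show "bij_betw ((!) rs) {0..<length rs} Rs"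
      using bij_betw_nth[OF rs(1), of "{0..<length rs}" Rs] rs(2) by (simp add: atLeast0LessThan)
  qed
  finally show ?thesis .
qed

section \<open>Adjoining outflow reactions\<close>

lemma append_outflows:
  assumes R: "finite R" "card R = s" and I: "I \<subseteq> {0..<n}" "card I = d" "\<forall>i\<in>I. outflow i \<notin> R"
    and n: "n = d + s"
  defines "zs \<equiv> enum_rxns R @ map (\<lambda>b. outflow (pick I b)) [0..<d]"
  shows "set zs = R \<union> outflow ` I" and "length zs = n" and "distinct zs"
proof -
  have finI: "finite I" using I(1) finite_subset by blast
  have "set (map (\<lambda>b. outflow (pick I b)) [0..<d]) = outflow ` pick I ` {0..<d}" by auto
  then show set_zs: "set zs = R \<union> outflow ` I"
    using pick_image[OF finI] I(2) enum_rxns(2)[OF R(1)] by (simp add: zs_def)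
  show len_zs: "length zs = n" using enum_rxns(3)[OF R(1)] R(2) n by (simp add: zs_def)
  have "card (outflow ` I) = d" using I(2) card_image outflow_inj by (metis inj_onI)
  moreover have "card (R \<union> outflow ` I) = card R + card (outflow ` I)"
    by (rule card_Un_disjoint) (use R(1) finI I(3) in auto)
  ultimately show "distinct zs" using R(2) n by (intro card_distinct) (simp add: set_zs len_zs)
qed

lemma mat_append_outflows:
  assumes ys: "length ys = s" and n: "n = s + d"
    and h: "\<And>i j. h i (outflow j) = (if i = j then 1 else 0)"
  shows "mat n n (\<lambda>(i,k). h i ((ys @ map (\<lambda>b. outflow (pick I b)) [0..<d]) ! k)) =
    mat n n (\<lambda>(i,k). if k < s then h i (ys ! k) else if i = pick I (k - s) then 1 else 0)"
proof (rule eq_matI)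
  fix i k assume "i < dim_row (mat n n (\<lambda>(i,k). if k < s then h i (ys ! k) else if i = pick I (k - s) then 1 else 0))"
    "k < dim_col (mat n n (\<lambda>(i,k). if k < s then h i (ys ! k) else if i = pick I (k - s) then 1 else 0))"
  then have ik: "i < n" "k < n" by simp_all
  show "mat n n (\<lambda>(i,k). h i ((ys @ map (\<lambda>b. outflow (pick I b)) [0..<d]) ! k)) $$ (i,k) =
      mat n n (\<lambda>(i,k). if k < s then h i (ys ! k) else if i = pick I (k - s) then 1 else 0) $$ (i,k)"
  proof (cases "k < s")
    case False
    then have "k - s < d" using ik n by simp
    then show ?thesis using False ik by (simp add: nth_append ys h)
  qed (use ik in \<open>simp add: nth_append ys\<close>)
qed simp_all

lemma sigma_outflow_extension:
  assumes R: "finite R" "card R = s" and I: "I \<subseteq> {0..<n}" "card I = d" "\<forall>i\<in>I. outflow i \<notin> R"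
    and n: "n = d + s"
  shows "sigma n (R \<union> outflow ` I) = (-1) ^ n * (det (del_rows (Ymat n R) I) * det (del_rows (Gmat n R) I))"
proof -
  define zs where "zs = enum_rxns R @ map (\<lambda>b. outflow (pick I b)) [0..<d]"
  note zs = append_outflows[OF R I n, folded zs_def]
  have fin_ext: "finite (R \<union> outflow ` I)" using R(1) I(1) finite_subset by auto
  have card_ext: "card (R \<union> outflow ` I) = n" using zs distinct_card by metis
  have ws: "distinct (enum_rxns (R \<union> outflow ` I))" "set zs = set (enum_rxns (R \<union> outflow ` I))"
    using enum_rxns[OF fin_ext] zs(1) by auto
  have len: "length (enum_rxns R) = s" "n = s + d" "n = s + card I"
    using enum_rxns(3)[OF R(1)] R(2) I(2) n by auto
  have "det (Ymat n (R \<union> outflow ` I)) * det (Gmat n (R \<union> outflow ` I)) =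
      det (mat n n (\<lambda>(i,k). real (fst (zs ! k) i))) * det (mat n n (\<lambda>(i,k). gcol (zs ! k) i))"
    unfolding Ymat_Gmat_enum[OF fin_ext] card_ext
    by (rule det_mult_det_reorder_cols[OF zs(3) ws zs(2)])
  also have "\<dots> = det (del_rows (Ymat n R) I) * det (del_rows (Gmat n R) I)"
    unfolding zs_def mat_append_outflows[OF len(1) len(2) fst_outflow]
      mat_append_outflows[OF len(1) len(2), of "\<lambda>i r. gcol r i", OF gcol_outflow]
      det_mult_det_unit_cols[OF I(1) len(3)] del_rows_Ymat_Gmat[OF R I(1,2) n] ..
  finally show ?thesis unfolding sigma_def by (simp add: mult.assoc)
qed

lemma Rs_sets_restrict_eq_image:
  assumes R: "R \<subseteq> Rs" "card R = s" and n: "n = d + s"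
  shows "{R' \<in> Rs_sets n Rs s. R' \<inter> Rs = R} = (\<lambda>I. R \<union> outflow ` I) ` Od n Rs d"
proof -
  have no_outflow: "outflow i \<notin> Rs" if "I \<in> Od n Rs d" "i \<in> I" for I i
    using that unfolding Od_def Oset_def by auto
  have "n - s = d" using n by simp
  then show ?thesis
    unfolding Rs_sets_def using R no_outflow by fastforce
qed

lemma jacobian_coeff_eq_sigma_sum:
  assumes fin: "finite Rs" and R: "R \<subseteq> Rs" "card R = s" and n: "n = d + s"
  shows "jacobian_coeff n Rs d s c R = (-1) ^ d * cpow n c (\<lambda>j. -1 + (\<Sum>r\<in>R. int (fst r j))) *
    (\<Sum>R'\<in>{R' \<in> Rs_sets n Rs s. R' \<inter> Rs = R}. sigma n R' * (\<Prod>i\<in>{i. outflow i \<in> R' - R}. c i))"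
proof -
  have Od: "I \<subseteq> {0..<n}" "card I = d" "\<forall>i\<in>I. outflow i \<notin> Rs" if "I \<in> Od n Rs d" for I
    using that unfolding Od_def Oset_def by auto
  have outflows: "{i. outflow i \<in> (R \<union> outflow ` I) - R} = I" if "I \<in> Od n Rs d" for I
    using Od(3)[OF that] R(1) outflow_inj by blast
  have "inj_on (\<lambda>I. R \<union> outflow ` I) (Od n Rs d)"
  proof (rule inj_onI)
    fix I I' assume I: "I \<in> Od n Rs d" "I' \<in> Od n Rs d" "R \<union> outflow ` I = R \<union> outflow ` I'"
    then show "I = I'" using outflows by metis
  qed
  have sigma: "sigma n (R \<union> outflow ` I) = (-1) ^ n * (det (del_rows (Ymat n R) I) * det (del_rows (Gmat n R) I))"
    if "I \<in> Od n Rs d" for I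
    using sigma_outflow_extension[OF finite_subset[OF R(1) fin] R(2) Od(1,2)[OF that] _ n] Od(3)[OF that] R(1)
    by blast
  have "(\<Sum>R'\<in>{R' \<in> Rs_sets n Rs s. R' \<inter> Rs = R}. sigma n R' * (\<Prod>i\<in>{i. outflow i \<in> R' - R}. c i)) =
      (\<Sum>I\<in>Od n Rs d. (-1) ^ n * (det (del_rows (Ymat n R) I) * det (del_rows (Gmat n R) I)) *
        (\<Prod>i\<in>I. c i))"
    unfolding Rs_sets_restrict_eq_image[OF R n] using \<open>inj_on _ _\<close> sigma outflows
    by (simp add: sum.reindex cong: sum.cong)
  then have "(-1) ^ d * cpow n c (\<lambda>j. -1 + (\<Sum>r\<in>R. int (fst r j))) *
      (\<Sum>R'\<in>{R' \<in> Rs_sets n Rs s. R' \<inter> Rs = R}. sigma n R' * (\<Prod>i\<in>{i. outflow i \<in> R' - R}. c i)) =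
      ((-1) ^ d * (-1) ^ n) * cpow n c (\<lambda>j. -1 + (\<Sum>r\<in>R. int (fst r j))) *
      (\<Sum>I\<in>Od n Rs d. det (del_rows (Ymat n R) I) * det (del_rows (Gmat n R) I) * (\<Prod>i\<in>I. c i))"
    by (simp add: sum_distrib_left ac_simps)
  also have "(-1::real) ^ d * (-1) ^ n = (-1) ^ s"
    using n by (simp add: power_add mult.assoc[symmetric] power_mult_distrib[symmetric])
  finally show ?thesis unfolding jacobian_coeff_def ..
qed

theorem corollary7p3:
  fixes n s d :: nat and Rs :: "rxn set" and \<omega> :: "nat \<Rightarrow> nat \<Rightarrow> real"
  assumes net: "crn n Rs"
    and s_def: "s = stoich_dim n Rs"
    and d_def: "d = n - s"
    and red: "reduced_basis n Rs d \<omega>"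
  shows
    "\<exists>coef :: (nat \<Rightarrow> real) \<Rightarrow> rxn set \<Rightarrow> real.
       (\<forall>c \<kappa>. (\<forall>i<n. c i > 0) \<longrightarrow> (\<forall>r\<in>Rs. \<kappa> r > 0) \<longrightarrow>
          det (jacobian_mat n (ext_rate_fun n d \<omega> Rs \<kappa>) c) =
            (\<Sum>R\<in>{R. R \<subseteq> Rs \<and> card R = s}. coef c R * (\<Prod>r\<in>R. \<kappa> r))) \<and>
       (\<forall>c R. (\<forall>i<n. c i > 0) \<longrightarrow> R \<subseteq> Rs \<longrightarrow> card R = s \<longrightarrow>
          coef c R =
            (-1) ^ s * cpow n c (\<lambda>j. -1 + (\<Sum>r\<in>R. int (fst r j))) *
            (\<Sum>I\<in>Od n Rs d. det (del_rows (Ymat n R) I) * det (del_rows (Gmat n R) I)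
                              * (\<Prod>i\<in>I. c i)) \<and>
          coef c R =
            (-1) ^ d * cpow n c (\<lambda>j. -1 + (\<Sum>r\<in>R. int (fst r j))) *
            (\<Sum>R'\<in>{R' \<in> Rs_sets n Rs s. R' \<inter> Rs = R}.
                sigma n R' * (\<Prod>i\<in>{i. outflow i \<in> R' - R}. c i)))"
proof -
  have fin: "finite Rs" using net unfolding crn_def by simp
  have orth: "\<forall>i<d. \<forall>r\<in>Rs. (\<Sum>j<n. \<omega> i j * (real (snd r j) - real (fst r j))) = 0"
    and red': "\<forall>i<d. \<omega> i i = 1 \<and> (\<forall>j<d. j \<noteq> i \<longrightarrow> \<omega> i j = 0)"
    using red unfolding reduced_basis_def by auto
  have "Gmat n Rs \<in> carrier_mat n (length (enum_rxns Rs))" by (simp add: Gmat_def Let_def)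
  then have "s \<le> n" unfolding s_def stoich_dim_def by (rule rank_le_dim_row)
  then have n: "n = d + s" using d_def by simp
  show ?thesis
  proof (intro exI[of _ "jacobian_coeff n Rs d s"] conjI allI impI)
    fix c :: "nat \<Rightarrow> real" and \<kappa> :: "rxn \<Rightarrow> real"
    assume c: "\<forall>i<n. 0 < c i"
    show "det (jacobian_mat n (ext_rate_fun n d \<omega> Rs \<kappa>) c) =
        (\<Sum>R\<in>{R. R \<subseteq> Rs \<and> card R = s}. jacobian_coeff n Rs d s c R * (\<Prod>r\<in>R. \<kappa> r))"
      unfolding det_jacobian_ext_rate_fun[OF c red' n] by (rule det_reduced_rate_jac_expansion[OF fin c orth red' n])
  next
    fix c :: "nat \<Rightarrow> real" and R
    assume "R \<subseteq> Rs" "card R = s"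
    then show "jacobian_coeff n Rs d s c R =
        (-1) ^ d * cpow n c (\<lambda>j. -1 + (\<Sum>r\<in>R. int (fst r j))) *
        (\<Sum>R'\<in>{R' \<in> Rs_sets n Rs s. R' \<inter> Rs = R}. sigma n R' * (\<Prod>i\<in>{i. outflow i \<in> R' - R}. c i))"
      by (rule jacobian_coeff_eq_sigma_sum[OF fin _ _ n])
  qed (simp add: jacobian_coeff_def)
qed

end
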